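(* Let $q\ge1$, $k\ge2$ be integers, $\mathcal{A}$ as in the context, and $p_1\ge3$ a prime. For the type-$\mathcal{A}$ random walk on $\mathbb{Z}^k$ and $0\le a\le p_1-1$, let $\overline{S}_{n,k}(a;p_1)=\frac1n\sum_{1\le i\le n,\ i\equiv a\pmod{p_1}}X_i$. Then for every $\varepsilon>0$, as $n\to\infty$, $$\mathbb{E}\big(\overline{S}_{n,k}(0;p_1)\big)=\frac{p_1^{k-1}-1}{p_1^k-1}\cdot\frac1{\zeta(k)}+O_{\mathcal{A},k,q,\varepsilon}(n^{-1/2+\varepsilon}),$$ $$\mathbb{E}\big(\overline{S}_{n,k}(a;p_1)\big)=\frac{p_1^{k-1}}{p_1^k-1}\cdot\frac1{\zeta(k)}+O_{\mathcal{A},k,q,\varepsilon}(n^{-1/2+\varepsilon})\quad\text{if } a\ne0.$$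
   Context: $\mathcal{A}=\{\boldsymbol{\alpha}_1,\dots,\boldsymbol{\alpha}_q\}$ is a finite set of vectors $\boldsymbol{\alpha}_t=(\alpha_{t,1},\dots,\alpha_{t,k})$ with $0<\alpha_{t,j}<1$ for all $j$ and $\alpha_{t,1}+\cdots+\alpha_{t,k}=1$. For $\boldsymbol{\alpha}=(\alpha_1,\dots,\alpha_k)$ of this form, a type-$\boldsymbol{\alpha}$ step $\mathbf{w}(\boldsymbol{\alpha})$ is a random vector equal to the $j$-th standard basis vector of $\mathbb{Z}^k$ with probability $\alpha_j$. The type-$\mathcal{A}$ random walk is $\mathbf{p}_0=(0,\dots,0)$, $\mathbf{p}_i=\mathbf{p}_{i-1}+\mathbf{w}(\boldsymbol{\alpha}'_i)$ for $i\ge1$, where at each step a type $\boldsymbol{\alpha}'_i\in\mathcal{A}$ is chosen and the steps are independent. A lattice point $\mathbf{n}=(n_1,\dots,n_k)\in\mathbb{Z}^k$ is visible if there is no other lattice point on the segment joining it to the origin (equivalently $\gcd(n_1,\dots,n_k)=1$). $X_i=1$ if $\mathbf{p}_i$ is visible and $X_i=0$ otherwise. $\zeta$ is the Riemann zeta function. *)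

theory Defs
  imports "HOL-Probability.Probability"
begin

definition valid_type :: "nat \<Rightarrow> real list \<Rightarrow> bool" where
  "valid_type k \<alpha> \<longleftrightarrow> length \<alpha> = k \<and> (\<forall>x\<in>set \<alpha>. 0 < x \<and> x < 1) \<and> sum_list \<alpha> = 1"

text \<open>Distribution of the coordinate index j chosen by a type-alpha step (j-th basis vector
with probability alpha_j).\<close>
definition step_index_pmf :: "real list \<Rightarrow> nat pmf" where
  "step_index_pmf \<alpha> = embed_pmf (\<lambda>j. if j < length \<alpha> then \<alpha> ! j else 0)"

text \<open>Distribution of the position p_i of the type-A random walk in Z^k, where sigma i is
the type used at step i (i >= 1); steps are independent.  Points are int lists of length k.\<close>
fun walk_pmf :: "nat \<Rightarrow> (nat \<Rightarrow> real list) \<Rightarrow> nat \<Rightarrow> int list pmf" where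
  "walk_pmf k \<sigma> 0 = return_pmf (replicate k 0)"
| "walk_pmf k \<sigma> (Suc i) =
     bind_pmf (walk_pmf k \<sigma> i)
       (\<lambda>p. map_pmf (\<lambda>j. p[j := p ! j + 1]) (step_index_pmf (\<sigma> (Suc i))))"

definition visible :: "int list \<Rightarrow> bool" where
  "visible p \<longleftrightarrow> Gcd (set p) = 1"

definition EXvis :: "nat \<Rightarrow> (nat \<Rightarrow> real list) \<Rightarrow> nat \<Rightarrow> real" where
  "EXvis k \<sigma> i = measure_pmf.expectation (walk_pmf k \<sigma> i) (\<lambda>p. if visible p then 1 else 0)"

definition ESbar :: "nat \<Rightarrow> (nat \<Rightarrow> real list) \<Rightarrow> nat \<Rightarrow> nat \<Rightarrow> nat \<Rightarrow> real" where
  "ESbar k \<sigma> n a p1 = (1 / real n) * (\<Sum>i\<in>{i\<in>{1..n}. i mod p1 = a}. EXvis k \<sigma> i)"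

definition zeta_nat :: "nat \<Rightarrow> real" where
  "zeta_nat s = (\<Sum>m. 1 / real (Suc m) ^ s)"

end

(*
  Since the coordinates of p_i sum to i, their gcd divides i, and Moebius inversion gives
  E(X_i) = sum_{d | i} mu(d) P(d divides every coordinate of p_i).  Expanding this probability
  over the characters of (Z/dZ)^k, the diagonal frequencies (c, ..., c) contribute exactly
  1/d^(k-1), while every other frequency is damped exponentially in i, because the steps are
  independent and each step probability is at least some a > 0; a Gaussian sum over the residues
  mod d bounds the total error by O(k / (a sqrt i)), uniformly in d.  Averaged over the i <= n in
  a residue class mod p, the main terms sum_{d | i} mu(d) / d^(k-1) become partial sums of
  sum_d mu(d) / d^k, over all d or only over d coprime to p, which converge to 1/zeta(k) and
  p^k / ((p^k - 1) zeta(k)) with error O(n^(-1/2)).  The accumulated error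
  sum_{i <= n} tau(i) / sqrt i <= 2 sqrt n H_n = O(n^(1/2 + eps)) gives the error term.
*)

theory Submission
  imports Defs "HOL-Computational_Algebra.Squarefree"
begin

section \<open>The Moebius function\<close>

definition moebius_mu :: "nat \<Rightarrow> real" where
  "moebius_mu n = (if squarefree n then (-1) ^ card (prime_factors n) else 0)"

lemma abs_moebius_mu_le: "\<bar>moebius_mu n\<bar> \<le> 1"
  by (simp add: moebius_mu_def)

lemma prod_prime_factors_squarefree:
  fixes n :: nat
  assumes "squarefree n"
  shows "\<Prod>(prime_factors n) = n"
proof -
  have "n \<noteq> 0" using assms by (metis not_squarefree_0)
  then have "\<forall>p\<in>prime_factors n. multiplicity p n = 1"
    using assms squarefree_factorial_semiring' by blast
  then show ?thesis
    using prod_prime_factors[OF \<open>n \<noteq> 0\<close>] by simp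
qed

lemma
  fixes S :: "nat set"
  assumes "finite S" and "\<And>p. p \<in> S \<Longrightarrow> prime p"
  shows prime_factors_prod_primes: "prime_factors (\<Prod>S) = S"
    and squarefree_prod_primes: "squarefree (\<Prod>S)"
proof -
  have "0 \<notin> S" using assms(2) by fastforce
  then show "prime_factors (\<Prod>S) = S"
    using assms by (simp add: prime_factors_prod prime_prime_factors)
  show "squarefree (\<Prod>S)"
    using assms by (intro squarefree_prod_coprime) (auto intro: primes_coprime squarefree_prime)
qed

lemma squarefree_divisors_eq_prod_Pow:
  fixes n :: nat
  assumes "n > 0"
  shows "{d. d dvd n \<and> squarefree d} = Prod ` Pow (prime_factors n)"
proof safe
  fix d assume d: "d dvd n" "squarefree d"
  then have "prime_factors d \<subseteq> prime_factors n"
    using assms by (intro dvd_prime_factors) auto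
  then show "d \<in> Prod ` Pow (prime_factors n)"
    using prod_prime_factors_squarefree[OF d(2)] by (metis Pow_iff image_eqI)
next
  fix S assume S: "S \<subseteq> prime_factors n"
  then have primes: "finite S" "\<And>p. p \<in> S \<Longrightarrow> prime p"
    by (auto intro: finite_subset)
  show "squarefree (\<Prod>S)" by (rule squarefree_prod_primes[OF primes])
  have "\<Prod>S dvd (\<Prod>p\<in>prime_factors n. p ^ multiplicity p n)"
  proof (rule prod_dvd_prod_subset2[OF _ S])
    fix p assume "p \<in> S"
    then have "multiplicity p n > 0" using S prime_factors_multiplicity by blast
    then show "p dvd p ^ multiplicity p n" by (simp add: dvd_power)
  qed simp
  then show "\<Prod>S dvd n"
    using assms prod_prime_factors[of n] by simp
qed

lemma sum_Pow_minus_one_power_card: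
  assumes "finite A" and "A \<noteq> {}"
  shows "(\<Sum>X\<in>Pow A. (-1::real) ^ card X) = 0"
proof -
  have "(\<Prod>x\<in>A. (-1::real) + 1) = (\<Sum>X\<in>Pow A. (-1) ^ card X)"
    by (subst prod_add[OF assms(1)]) simp
  moreover have "(\<Prod>x\<in>A. (-1::real) + 1) = 0"
    using assms by (simp add: card_gt_0_iff)
  ultimately show ?thesis by simp
qed

lemma sum_moebius_mu_divisors:
  fixes n :: nat
  assumes "n > 0"
  shows "(\<Sum>d | d dvd n. moebius_mu d) = (if n = 1 then 1 else 0)"
proof -
  have "(\<Sum>d | d dvd n. moebius_mu d) = (\<Sum>d | d dvd n \<and> squarefree d. moebius_mu d)"
    using assms by (intro sum.mono_neutral_right) (auto simp: moebius_mu_def)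
  also have "\<dots> = (\<Sum>S\<in>Pow (prime_factors n). (-1) ^ card S)"
  proof (rule sum.reindex_cong[where l = Prod])
    show "inj_on Prod (Pow (prime_factors n))"
    proof (rule inj_on_inverseI)
      fix S assume "S \<in> Pow (prime_factors n)"
      then show "prime_factors (\<Prod>S) = S"
        by (intro prime_factors_prod_primes) (auto intro: finite_subset)
    qed
  next
    fix S assume "S \<in> Pow (prime_factors n)"
    then have "finite S" "\<And>p. p \<in> S \<Longrightarrow> prime p"
      by (auto intro: finite_subset)
    then show "moebius_mu (\<Prod>S) = (-1) ^ card S"
      by (simp add: moebius_mu_def squarefree_prod_primes prime_factors_prod_primes)
  qed (rule squarefree_divisors_eq_prod_Pow[OF assms])
  also have "\<dots> = (if n = 1 then 1 else 0)"
  proof (cases "n = 1")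
    case False
    then obtain p where "prime p" "p dvd n"
      using prime_factor_nat by blast
    then have "p \<in> prime_factors n"
      using assms by (simp add: in_prime_factors_iff)
    then have "prime_factors n \<noteq> {}" by blast
    then show ?thesis using False by (simp add: sum_Pow_minus_one_power_card)
  qed simp
  finally show ?thesis .
qed

lemma moebius_mu_prime_mult:
  fixes p d :: nat
  assumes "prime p" and "d > 0"
  shows "moebius_mu (p * d) = (if p dvd d then 0 else - moebius_mu d)"
proof (cases "p dvd d")
  case True
  then have "p ^ 2 dvd p * d" by (simp add: power2_eq_square)
  then have "\<not> squarefree (p * d)"
    using assms(1) by (meson not_prime_unit squarefreeD)
  then show ?thesis using True by (simp add: moebius_mu_def)
next
  case False
  have "coprime p d" using assms(1) False by (simp add: prime_imp_coprime)
  then have "squarefree (p * d) \<longleftrightarrow> squarefree d"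
    using assms(1) squarefree_mult_coprime squarefree_prime squarefree_multD by blast
  moreover have "prime_factors (p * d) = insert p (prime_factors d)" "p \<notin> prime_factors d"
    using assms False by (auto simp: prime_factors_product prime_prime_factors)
  ultimately show ?thesis using False by (simp add: moebius_mu_def)
qed

section \<open>Elementary sums and the zeta function\<close>

lemma multiples_in_atLeastAtMost:
  fixes d n :: nat
  assumes "d > 0"
  shows "{i. i \<in> {1..n} \<and> d dvd i} = (\<lambda>j. d * j) ` {1..n div d}"
  using assms by (auto simp: less_eq_div_iff_mult_less_eq mult.commute Suc_le_eq intro!: Nat.gr0I)

lemma sum_atLeastAtMost_split_dvd:
  fixes N p :: nat
  shows "(\<Sum>d=1..N. g d)
    = (\<Sum>d | d \<in> {1..N} \<and> \<not> p dvd d. g d) + (\<Sum>d | d \<in> {1..N} \<and> p dvd d. g d)"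
proof -
  have "{d. d \<in> {1..N} \<and> \<not> p dvd d} \<union> {d. d \<in> {1..N} \<and> p dvd d} = {1..N}" by auto
  moreover have "sum g ({d. d \<in> {1..N} \<and> \<not> p dvd d} \<union> {d. d \<in> {1..N} \<and> p dvd d})
      = (\<Sum>d | d \<in> {1..N} \<and> \<not> p dvd d. g d) + (\<Sum>d | d \<in> {1..N} \<and> p dvd d. g d)"
    by (rule sum.union_disjoint) (auto intro: rev_finite_subset[of "{1..N}"])
  ultimately show ?thesis by simp
qed

lemma sum_sum_divisors_swap:
  fixes f :: "nat \<Rightarrow> nat \<Rightarrow> 'a::comm_monoid_add"
  shows "(\<Sum>i | i \<in> {1..n} \<and> P i. \<Sum>d | d dvd i. f d i)
       = (\<Sum>d=1..n. \<Sum>j | j \<in> {1..n div d} \<and> P (d * j). f d (d * j))"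
proof -
  have "(\<Sum>i | i \<in> {1..n} \<and> P i. \<Sum>d | d dvd i. f d i)
      = (\<Sum>i | i \<in> {1..n} \<and> P i. \<Sum>d | d \<in> {1..n} \<and> d dvd i. f d i)"
    by (intro sum.cong refl arg_cong[where f = "\<lambda>D. sum _ D"])
      (auto dest: dvd_imp_le intro: Nat.gr0I)
  also have "\<dots> = (\<Sum>d=1..n. \<Sum>i | i \<in> {1..n} \<and> P i \<and> d dvd i. f d i)"
    by (subst sum.swap_restrict) (auto intro!: sum.cong)
  also have "\<dots> = (\<Sum>d=1..n. \<Sum>j | j \<in> {1..n div d} \<and> P (d * j). f d (d * j))"
  proof (rule sum.cong[OF refl])
    fix d assume d: "d \<in> {1..n}"
    have "{i. i \<in> {1..n} \<and> P i \<and> d dvd i} = {i \<in> {i. i \<in> {1..n} \<and> d dvd i}. P i}"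
      by blast
    also have "\<dots> = (\<lambda>j. d * j) ` {j. j \<in> {1..n div d} \<and> P (d * j)}"
      using d by (subst multiples_in_atLeastAtMost) auto
    finally have "{i. i \<in> {1..n} \<and> P i \<and> d dvd i} = (\<lambda>j. d * j) ` {j. j \<in> {1..n div d} \<and> P (d * j)}" .
    moreover have "inj_on (\<lambda>j. d * j) {j. j \<in> {1..n div d} \<and> P (d * j)}"
      using d by (auto simp: inj_on_def)
    ultimately show "(\<Sum>i | i \<in> {1..n} \<and> P i \<and> d dvd i. f d i)
        = (\<Sum>j | j \<in> {1..n div d} \<and> P (d * j). f d (d * j))"
      by (simp add: sum.reindex)
  qed
  finally show ?thesis .
qed

lemma less_two_mult_div:
  fixes d N :: nat
  assumes "0 < d" and "d \<le> N"
  shows "N < 2 * (d * (N div d))"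
proof -
  have "d * 1 \<le> d * (N div d)"
    using assms by (intro mult_le_mono2) (simp add: div_greater_zero_iff Suc_le_eq)
  moreover have "N < d * (N div d) + d"
    using assms(1) mult_div_mod_eq[of d N] mod_less_divisor[of d N] by linarith
  ultimately show ?thesis by linarith
qed

lemma sum_inverse_sqrt_le: "(\<Sum>j=1..m. 1 / sqrt (real j)) \<le> 2 * sqrt (real m)"
proof (induction m)
  case (Suc m)
  have "sqrt (real m) * sqrt (real (Suc m)) \<le> real m + 1/2"
  proof -
    have "sqrt (real m) * sqrt (real (Suc m)) = sqrt (real m * real (Suc m))"
      by (simp add: real_sqrt_mult)
    also have "\<dots> \<le> sqrt ((real m + 1/2)^2)"
      by (subst real_sqrt_le_iff) (simp add: power2_eq_square algebra_simps)
    finally show ?thesis by simp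
  qed
  then have "1 \<le> (2 * sqrt (real (Suc m)) - 2 * sqrt (real m)) * sqrt (real (Suc m))"
    by (simp add: algebra_simps)
  then have "1 / sqrt (real (Suc m)) \<le> 2 * sqrt (real (Suc m)) - 2 * sqrt (real m)"
    by (simp add: field_simps)
  then show ?case using Suc by simp
qed simp

lemma harm_le_two_sqrt: "(harm m :: real) \<le> 2 * sqrt (real m)"
proof -
  have "sqrt (real j) \<le> real j" if "j \<ge> 1" for j
    using that real_sqrt_le_iff[of "real j" "real j ^ 2"] by (simp add: power2_eq_square)
  then have "(harm m :: real) \<le> (\<Sum>j=1..m. 1 / sqrt (real j))"
    unfolding harm_def inverse_eq_divide by (intro sum_mono divide_left_mono) auto
  then show ?thesis using sum_inverse_sqrt_le[of m] by linarith
qed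

lemma harm_le_one_plus_ln: "m \<ge> 1 \<Longrightarrow> (harm m :: real) \<le> 1 + ln (real m)"
proof (induction m rule: dec_induct)
  case (step m)
  have "ln (real m / real (Suc m)) \<le> real m / real (Suc m) - 1"
    using step by (intro ln_le_minus_one) auto
  then have "1 / real (Suc m) \<le> ln (real (Suc m)) - ln (real m)"
    using step by (simp add: ln_div field_simps)
  then show ?case using step by (simp add: harm_Suc inverse_eq_divide)
qed (simp add: harm_expand)

lemma harm_le_powr:
  assumes "n \<ge> 1" and "\<epsilon> > 0"
  shows "(harm n :: real) \<le> (1 + 1 / \<epsilon>) * real n powr \<epsilon>"
proof -
  have "\<epsilon> * ln (real n) = ln (real n powr \<epsilon>)"
    using assms(1) by (simp add: ln_powr)
  also have "\<dots> \<le> real n powr \<epsilon> - 1"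
    using assms(1) by (intro ln_le_minus_one) simp
  finally have "ln (real n) \<le> real n powr \<epsilon> / \<epsilon>"
    using assms(2) by (simp add: field_simps)
  moreover have "1 \<le> real n powr \<epsilon>"
    using assms by (simp add: ge_one_powr_ge_zero)
  ultimately show ?thesis
    using harm_le_one_plus_ln[OF assms(1)] by (simp add: algebra_simps)
qed

definition zeta_partial :: "nat \<Rightarrow> nat \<Rightarrow> real" where
  "zeta_partial k T = (\<Sum>m=1..T. 1 / real m ^ k)"

lemma zeta_nat_tail_bounds:
  assumes k: "k \<ge> 2" and T: "T \<ge> 1"
  shows "0 \<le> zeta_nat k - zeta_partial k T" and "zeta_nat k - zeta_partial k T \<le> 1 / real T"
proof -
  let ?f = "\<lambda>m. 1 / real (Suc m) ^ k"
  have "summable (\<lambda>m. 1 / real m ^ k)"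
    using inverse_power_summable[OF k] by (simp add: divide_inverse)
  then have summable: "summable ?f"
    by (subst summable_Suc_iff)
  have "zeta_partial k T = (\<Sum>m<T. ?f m)"
    unfolding zeta_partial_def by (subst image_Suc_lessThan[symmetric]) (simp add: sum.reindex)
  then have tail: "zeta_nat k - zeta_partial k T = (\<Sum>n. ?f (n + T))"
    unfolding zeta_nat_def using suminf_split_initial_segment[OF summable, of T] by simp
  have summable_tail: "summable (\<lambda>n. ?f (n + T))"
    using summable by (subst summable_iff_shift)
  show "0 \<le> zeta_nat k - zeta_partial k T"
    unfolding tail by (intro suminf_nonneg summable_tail) simp
  have telescope: "(\<lambda>n. 1 / real (n + T) - 1 / real (Suc n + T)) sums (1 / real T)"
  proof -
    have "(\<lambda>n. 1 / real (n + T)) \<longlonglongrightarrow> 0"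
      using LIMSEQ_ignore_initial_segment[OF lim_inverse_n', of T]
      by (simp add: divide_inverse add.commute)
    then show ?thesis using telescope_sums'[of "\<lambda>n. 1 / real (n + T)" 0] by simp
  qed
  have "?f (n + T) \<le> 1 / real (n + T) - 1 / real (Suc n + T)" for n
  proof -
    have "real (Suc n + T) * real (n + T) \<le> real (Suc n + T) ^ 2"
      by (simp add: power2_eq_square)
    also have "\<dots> \<le> real (Suc n + T) ^ k"
      using k by (intro power_increasing) auto
    finally have "1 / real (Suc n + T) ^ k \<le> 1 / (real (Suc n + T) * real (n + T))"
      using T by (intro divide_left_mono) auto
    also have "\<dots> = 1 / real (n + T) - 1 / real (Suc n + T)"
      using T by (simp add: field_simps)
    finally show ?thesis by (simp add: add.commute)
  qed
  then show "zeta_nat k - zeta_partial k T \<le> 1 / real T"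
    unfolding tail using suminf_le[OF _ summable_tail sums_summable[OF telescope]]
      sums_unique[OF telescope] by simp
qed

lemma zeta_nat_ge_1: "k \<ge> 2 \<Longrightarrow> zeta_nat k \<ge> 1"
  using zeta_nat_tail_bounds(1)[of k 1] by (simp add: zeta_partial_def)

lemma sum_moebius_mu_zeta_partial:
  assumes "N \<ge> 1"
  shows "(\<Sum>d=1..N. moebius_mu d / real d ^ k * zeta_partial k (N div d)) = 1"
proof -
  have "(\<Sum>d=1..N. moebius_mu d / real d ^ k * zeta_partial k (N div d))
      = (\<Sum>d=1..N. \<Sum>j=1..N div d. moebius_mu d / real (d * j) ^ k)"
    by (simp add: zeta_partial_def sum_distrib_left power_mult_distrib)
  also have "\<dots> = (\<Sum>i=1..N. \<Sum>d | d dvd i. moebius_mu d / real i ^ k)"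
    using sum_sum_divisors_swap[where f = "\<lambda>d i. moebius_mu d / real i ^ k" and n = N and P = "\<lambda>_. True"]
    by (simp add: atLeastAtMost_def atLeast_def atMost_def Collect_conj_eq)
  also have "\<dots> = (\<Sum>i=1..N. if i = 1 then 1 else 0)"
    by (rule sum.cong[OF refl]) (simp add: sum_divide_distrib[symmetric] sum_moebius_mu_divisors)
  also have "\<dots> = 1"
    using assms by simp
  finally show ?thesis .
qed

section \<open>Partial sums of the Moebius series\<close>

definition moebius_partial :: "nat \<Rightarrow> nat \<Rightarrow> real" where
  "moebius_partial k N = (\<Sum>d=1..N. moebius_mu d / real d ^ k)"

lemma moebius_partial_approx:
  assumes k: "k \<ge> 2" and N: "N \<ge> 1"
  shows "\<bar>moebius_partial k N - 1 / zeta_nat k\<bar> \<le> 4 / sqrt (real N)"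
proof -
  let ?Z = "zeta_nat k"
  have term_le: "\<bar>moebius_mu d / real d ^ k * (?Z - zeta_partial k (N div d))\<bar> \<le> 2 / real N * (1 / real d)"
    if d: "d \<in> {1..N}" for d
  proof -
    have q: "N div d \<ge> 1" using d by (simp add: div_greater_zero_iff Suc_le_eq)
    have "real N < 2 * (real d * real (N div d))"
      using less_two_mult_div[of d N] d by (simp flip: of_nat_mult)
    then have inv_q: "1 / real (N div d) \<le> 2 * real d / real N"
      using q d by (simp add: field_simps)
    have dk: "real d ^ 2 \<le> real d ^ k" using d k by (intro power_increasing) auto
    have tail: "0 \<le> ?Z - zeta_partial k (N div d)" "?Z - zeta_partial k (N div d) \<le> 1 / real (N div d)"
      using zeta_nat_tail_bounds[OF k q] by auto
    have "\<bar>moebius_mu d / real d ^ k * (?Z - zeta_partial k (N div d))\<bar>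
        = \<bar>moebius_mu d\<bar> * (?Z - zeta_partial k (N div d)) / real d ^ k"
      using tail by (simp add: abs_mult)
    also have "\<dots> \<le> 1 * (1 / real (N div d)) / real d ^ k"
      using tail abs_moebius_mu_le[of d] by (intro divide_right_mono mult_mono) auto
    also have "\<dots> \<le> (2 * real d / real N) / real d ^ 2"
      using inv_q dk d by (intro frac_le) auto
    also have "\<dots> = 2 / real N * (1 / real d)"
      using d by (simp add: power2_eq_square field_simps)
    finally show ?thesis .
  qed
  have "?Z * moebius_partial k N - 1 = (\<Sum>d=1..N. moebius_mu d / real d ^ k * (?Z - zeta_partial k (N div d)))"
    using sum_moebius_mu_zeta_partial[OF N, of k]
    by (simp add: moebius_partial_def right_diff_distrib sum_subtractf sum_distrib_left mult.commute)
  also have "\<bar>\<dots>\<bar> \<le> (\<Sum>d=1..N. 2 / real N * (1 / real d))"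
    using term_le by (intro order_trans[OF sum_abs] sum_mono)
  also have "\<dots> = 2 / real N * harm N"
    by (simp add: harm_def sum_distrib_left inverse_eq_divide)
  also have "\<dots> \<le> 2 / real N * (2 * sqrt (real N))"
    by (intro mult_left_mono harm_le_two_sqrt) simp
  also have "\<dots> = 4 / sqrt (real N)"
    using N by (simp add: field_simps)
  finally have "\<bar>?Z * moebius_partial k N - 1\<bar> \<le> 4 / sqrt (real N)" .
  moreover have "\<bar>moebius_partial k N - 1 / ?Z\<bar> = \<bar>?Z * moebius_partial k N - 1\<bar> / ?Z"
    using zeta_nat_ge_1[OF k] by (simp add: field_simps abs_divide)
  moreover have "\<bar>?Z * moebius_partial k N - 1\<bar> / ?Z \<le> \<bar>?Z * moebius_partial k N - 1\<bar>"
    using zeta_nat_ge_1[OF k] mult_left_mono[of 1 ?Z "\<bar>?Z * moebius_partial k N - 1\<bar>"]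
    by (simp add: divide_le_eq)
  ultimately show ?thesis by linarith
qed

definition moebius_partial_coprime :: "nat \<Rightarrow> nat \<Rightarrow> nat \<Rightarrow> real" where
  "moebius_partial_coprime k p N = (\<Sum>d | d \<in> {1..N} \<and> \<not> p dvd d. moebius_mu d / real d ^ k)"

lemma moebius_partial_split_prime:
  assumes p: "prime p"
  shows "moebius_partial k N
       = moebius_partial_coprime k p N - moebius_partial_coprime k p (N div p) / real p ^ k"
proof -
  have "p > 0" using p prime_gt_0_nat by blast
  have "(\<Sum>d | d \<in> {1..N} \<and> p dvd d. moebius_mu d / real d ^ k)
      = (\<Sum>e=1..N div p. moebius_mu (p * e) / real (p * e) ^ k)"
    unfolding multiples_in_atLeastAtMost[OF \<open>p > 0\<close>] using \<open>p > 0\<close> by (simp add: sum.reindex inj_on_def)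
  also have "\<dots> = (\<Sum>e | e \<in> {1..N div p} \<and> \<not> p dvd e. - (moebius_mu e / real e ^ k) / real p ^ k)"
    using p by (subst sum.inter_filter)
      (auto intro!: sum.cong simp: moebius_mu_prime_mult power_mult_distrib)
  also have "\<dots> = - moebius_partial_coprime k p (N div p) / real p ^ k"
    by (simp add: moebius_partial_coprime_def sum_divide_distrib sum_negf)
  finally show ?thesis
    unfolding moebius_partial_def moebius_partial_coprime_def
    using sum_atLeastAtMost_split_dvd[of "\<lambda>d. moebius_mu d / real d ^ k" N p] by simp
qed

(* The sum of mu(d) / d^k over all d coprime to p: 1 / zeta(k) divided by the Euler factor 1 - p^(-k). *)
definition moebius_coprime_series :: "nat \<Rightarrow> nat \<Rightarrow> real" where
  "moebius_coprime_series k p = real p ^ k / ((real p ^ k - 1) * zeta_nat k)"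

lemma prime_power_ge:
  fixes p k :: nat
  assumes "prime p" and "k \<ge> 2"
  shows "real p ^ 2 \<le> real p ^ k" and "real p + 1 \<le> real p ^ k"
proof -
  have p2: "real p \<ge> 2" using prime_ge_2_nat[OF assms(1)] by simp
  show "real p ^ 2 \<le> real p ^ k" using assms(2) p2 by (intro power_increasing) auto
  moreover have "2 * real p \<le> real p ^ 2"
    using mult_right_mono[OF p2, of "real p"] by (simp add: power2_eq_square)
  ultimately show "real p + 1 \<le> real p ^ k" using p2 by linarith
qed

lemma moebius_partial_coprime_minus_series:
  assumes k: "k \<ge> 2" and p: "prime p"
  shows "moebius_partial_coprime k p N - moebius_coprime_series k p
    = (moebius_partial k N - 1 / zeta_nat k)
      + (moebius_partial_coprime k p (N div p) - moebius_coprime_series k p) / real p ^ k"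
proof -
  let ?P = "real p ^ k" and ?L = "moebius_coprime_series k p"
  have "?P - 1 \<noteq> 0" "?P \<noteq> 0" "zeta_nat k \<noteq> 0"
    using prime_power_ge[OF p k] zeta_nat_ge_1[OF k] prime_ge_2_nat[OF p] by linarith+
  then have "?L = 1 / zeta_nat k + ?L / ?P"
    by (simp add: moebius_coprime_series_def field_simps)
  then show ?thesis
    using moebius_partial_split_prime[OF p, of k N]
      diff_divide_distrib[of "moebius_partial_coprime k p (N div p)" ?L ?P] by linarith
qed

lemma two_sqrt_le_prime_power_sqrt_div:
  fixes p k N :: nat
  assumes p: "prime p" and k: "k \<ge> 2" and N: "p \<le> N"
  shows "2 * sqrt (real N) \<le> real p ^ k * sqrt (real (N div p))"
proof -
  have p2: "real p \<ge> 2" using prime_ge_2_nat[OF p] by simp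
  have "N < 2 * (p * (N div p))"
    using less_two_mult_div[of p N] prime_gt_0_nat[OF p] N by simp
  then have "real N < real (2 * (p * (N div p)))" by (simp only: of_nat_less_iff)
  then have "4 * real N \<le> 8 * real p * real (N div p)" by simp
  moreover have "8 * real p \<le> (real p ^ k) ^ 2"
  proof -
    have "8 * real p \<le> real p ^ 3 * real p" using p2 power_mono[OF p2, of 3] by simp
    also have "\<dots> = (real p ^ 2) ^ 2" by (simp add: power_numeral_reduce)
    also have "\<dots> \<le> (real p ^ k) ^ 2" using prime_power_ge[OF p k] by (intro power_mono) auto
    finally show ?thesis .
  qed
  ultimately have "4 * real N \<le> (real p ^ k) ^ 2 * real (N div p)"
    using mult_right_mono[of "8 * real p" "(real p ^ k) ^ 2" "real (N div p)"] by simp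
  then show ?thesis
    using real_sqrt_le_mono[of "4 * real N" "(real p ^ k) ^ 2 * real (N div p)"] p2
    by (simp add: real_sqrt_mult)
qed

lemma moebius_partial_coprime_approx:
  assumes k: "k \<ge> 2" and p: "prime p" and N: "N \<ge> 1"
  shows "\<bar>moebius_partial_coprime k p N - moebius_coprime_series k p\<bar> \<le> 8 / sqrt (real N)"
  using N
proof (induction N rule: less_induct)
  case (less N)
  let ?P = "real p ^ k" and ?L = "moebius_coprime_series k p" and ?q = "N div p"
  have P: "real p + 1 \<le> ?P" using prime_power_ge[OF p k] by simp
  have sqrtN: "0 < sqrt (real N)" using less.prems by simp
  have "\<bar>moebius_partial_coprime k p ?q - ?L\<bar> / ?P \<le> 4 / sqrt (real N)"
  proof (cases "p \<le> N")
    case True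
    then have q: "?q \<ge> 1" "?q < N"
      using prime_gt_1_nat[OF p] by (auto simp: div_greater_zero_iff Suc_le_eq)
    then have "\<bar>moebius_partial_coprime k p ?q - ?L\<bar> / ?P \<le> 8 / sqrt (real ?q) / ?P"
      using less.IH P by (intro divide_right_mono) auto
    also have "\<dots> = 8 / (?P * sqrt (real ?q))" by simp
    also have "\<dots> \<le> 8 / (2 * sqrt (real N))"
      using two_sqrt_le_prime_power_sqrt_div[OF p k True] sqrtN q P prime_gt_0_nat[OF p]
      by (intro divide_left_mono mult_pos_pos) auto
    finally show ?thesis by simp
  next
    case False
    then have "sqrt (real N) \<le> ?P - 1"
      using P less.prems real_sqrt_le_iff[of "real N" "real N ^ 2"] by (simp add: power2_eq_square)
    moreover have "\<bar>moebius_partial_coprime k p ?q - ?L\<bar> / ?P = 1 / ((?P - 1) * zeta_nat k)"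
      using False P prime_ge_2_nat[OF p] zeta_nat_ge_1[OF k]
      by (simp add: moebius_partial_coprime_def moebius_coprime_series_def)
    moreover have "1 / ((?P - 1) * zeta_nat k) \<le> 1 / (?P - 1)"
      using P zeta_nat_ge_1[OF k] mult_left_mono[of 1 "zeta_nat k" "?P - 1"] prime_ge_2_nat[OF p]
      by (intro divide_left_mono mult_pos_pos) auto
    moreover have "1 / (?P - 1) \<le> 4 / sqrt (real N)"
      using \<open>sqrt (real N) \<le> ?P - 1\<close> sqrtN by (intro frac_le) auto
    ultimately show ?thesis by linarith
  qed
  then show ?case
    using moebius_partial_coprime_minus_series[OF k p, of N] moebius_partial_approx[OF k less.prems]
      abs_triangle_ineq[of "moebius_partial k N - 1 / zeta_nat k" "(moebius_partial_coprime k p ?q - ?L) / ?P"]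
      P by (simp add: abs_divide)
qed

section \<open>The main term on a residue class\<close>

lemma inj_on_mult_mod_prime:
  fixes p d b c :: nat
  assumes p: "prime p" and d: "\<not> p dvd d" and c: "c \<le> b + p"
  shows "inj_on (\<lambda>j. (d * j) mod p) {b<..c}"
proof -
  have key: "x = y" if xy: "x \<le> y" "y < x + p" and eq: "(d * x) mod p = (d * y) mod p" for x y
  proof (rule ccontr)
    assume "x \<noteq> y"
    have "p dvd d * (y - x)"
      using eq xy mod_eq_dvd_iff_nat[of "d * x" "d * y" p] by (simp add: diff_mult_distrib2)
    then have "p dvd y - x" using p d prime_dvd_mult_iff by blast
    moreover have "0 < y - x" using xy \<open>x \<noteq> y\<close> by simp
    ultimately have "p \<le> y - x" by (rule dvd_imp_le)
    then show False using xy by simp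
  qed
  show ?thesis
  proof (rule inj_onI)
    fix x y assume x: "x \<in> {b<..c}" and y: "y \<in> {b<..c}" and eq: "(d * x) mod p = (d * y) mod p"
    show "x = y"
    proof (cases "x \<le> y")
      case True
      then show ?thesis using key[OF True _ eq] x y c by simp
    next
      case False
      then show ?thesis using key[of y x] eq x y c by simp
    qed
  qed
qed

lemma card_mult_mod_eq_block:
  fixes p d b a :: nat
  assumes p: "prime p" and d: "\<not> p dvd d" and a: "a < p"
  shows "card {j \<in> {b<..b + p}. (d * j) mod p = a} = 1"
proof -
  let ?f = "\<lambda>j. (d * j) mod p"
  have inj: "inj_on ?f {b<..b + p}" using inj_on_mult_mod_prime[OF p d] by simp
  have "?f ` {b<..b + p} \<subseteq> {..<p}" "card (?f ` {b<..b + p}) = card {..<p}"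
    using inj prime_gt_0_nat[OF p] by (auto simp: card_image)
  then have "?f ` {b<..b + p} = {..<p}" by (intro card_subset_eq) auto
  then have "a \<in> ?f ` {b<..b + p}" using a by simp
  then obtain j where j: "j \<in> {b<..b + p}" "?f j = a" by (rule imageE) simp
  have "{j' \<in> {b<..b + p}. ?f j' = a} = {j}"
  proof (intro equalityI subsetI)
    fix x assume "x \<in> {j' \<in> {b<..b + p}. ?f j' = a}"
    then have "?f x = ?f j" "x \<in> {b<..b + p}" using j by auto
    then show "x \<in> {j}" using inj_onD[OF inj _ _ j(1)] by simp
  qed (use j in simp)
  then show ?thesis by simp
qed

lemma card_mult_mod_eq_approx_not_dvd:
  fixes p d a m :: nat
  assumes p: "prime p" and d: "\<not> p dvd d" and a: "a < p"
  shows "\<bar>real (card {j \<in> {1..m}. (d * j) mod p = a}) - real m / real p\<bar> \<le> 1"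
proof (induction m rule: less_induct)
  case (less m)
  let ?A = "\<lambda>m. {j \<in> {1..m}. (d * j) mod p = a}"
  show ?case
  proof (cases "m < p")
    case True
    have "inj_on (\<lambda>j. (d * j) mod p) {0<..m}"
      using True by (intro inj_on_mult_mod_prime[OF p d]) simp
    then have "inj_on (\<lambda>j. (d * j) mod p) (?A m)"
      by (rule inj_on_subset) auto
    then have "card (?A m) \<le> card {a}"
      by (rule card_inj_on_le) auto
    then have "real (card (?A m)) \<le> 1" by simp
    moreover have "0 \<le> real m / real p" "real m / real p < 1" using True by simp_all
    ultimately show ?thesis by linarith
  next
    case False
    have "?A m = ?A (m - p) \<union> {j \<in> {m - p<..m - p + p}. (d * j) mod p = a}"
      using False by auto
    moreover have "card (?A (m - p) \<union> {j \<in> {m - p<..m - p + p}. (d * j) mod p = a})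
        = card (?A (m - p)) + 1"
      using card_mult_mod_eq_block[OF p d a, of "m - p"] by (subst card_Un_disjoint) auto
    ultimately have "real (card (?A m)) = real (card (?A (m - p))) + 1" by simp
    moreover have "real m / real p = real (m - p) / real p + 1"
      using False prime_gt_0_nat[OF p] by (simp add: field_simps)
    moreover have "\<bar>real (card (?A (m - p))) - real (m - p) / real p\<bar> \<le> 1"
      using less.IH[of "m - p"] False prime_gt_0_nat[OF p] by simp
    ultimately show ?thesis by simp
  qed
qed

(* The density of the j with d * j = a (mod p). *)
definition residue_weight :: "nat \<Rightarrow> nat \<Rightarrow> nat \<Rightarrow> real" where
  "residue_weight p a d = (if p dvd d then (if a = 0 then 1 else 0) else 1 / real p)"

lemma card_mult_mod_eq_approx:
  fixes p d a m :: nat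
  assumes p: "prime p" and a: "a < p"
  shows "\<bar>real (card {j \<in> {1..m}. (d * j) mod p = a}) - real m * residue_weight p a d\<bar> \<le> 1"
proof (cases "p dvd d")
  case True
  then have "{j \<in> {1..m}. (d * j) mod p = a} = (if a = 0 then {1..m} else {})" by auto
  then show ?thesis using True by (simp add: residue_weight_def)
next
  case False
  then show ?thesis
    using card_mult_mod_eq_approx_not_dvd[OF p False a, of m] by (simp add: residue_weight_def)
qed

(* The density of visible points on the hyperplane x_1 + ... + x_k = i. *)
definition visible_density :: "nat \<Rightarrow> nat \<Rightarrow> real" where
  "visible_density k i = (\<Sum>d | d dvd i. moebius_mu d / real d ^ (k - 1))"

definition residue_density :: "nat \<Rightarrow> nat \<Rightarrow> nat \<Rightarrow> real" where
  "residue_density k p a =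
     (if a = 0 then (real p ^ (k - 1) - 1) / (real p ^ k - 1) else real p ^ (k - 1) / (real p ^ k - 1))
     * (1 / zeta_nat k)"

lemma residue_density_eq:
  assumes k: "k \<ge> 2" and p: "prime p"
  defines "L \<equiv> moebius_coprime_series k p"
  shows "residue_density k p a = L / real p + (if a = 0 then 1 / zeta_nat k - L else 0)"
proof -
  define Q where "Q = real p ^ (k - 1)"
  define D where "D = (real p * Q - 1) * zeta_nat k"
  have pk: "real p ^ k = real p * Q"
    unfolding Q_def using k by (simp flip: power_Suc)
  have p2: "real p \<ge> 2" using prime_ge_2_nat[OF p] by simp
  have "real p ^ 1 < real p ^ k" using p2 k by (intro power_strict_increasing) auto
  then have "real p * Q - 1 \<noteq> 0" using p2 pk power_one_right[of "real p"] by linarith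
  moreover have "zeta_nat k \<noteq> 0" "real p \<noteq> 0" using p2 zeta_nat_ge_1[OF k] by auto
  ultimately have D: "D \<noteq> 0" and eqs: "L = real p * Q / D" "1 / zeta_nat k = (real p * Q - 1) / D"
    "residue_density k p a = (if a = 0 then Q - 1 else Q) / D"
    unfolding D_def L_def moebius_coprime_series_def residue_density_def pk Q_def[symmetric] by auto
  show ?thesis
    unfolding eqs using D \<open>real p \<noteq> 0\<close> by (cases "a = 0") (simp_all add: field_simps)
qed

lemma sum_moebius_residue_weight:
  fixes n p a :: nat
  shows "(\<Sum>d=1..n. moebius_mu d / real d ^ k * residue_weight p a d)
    = moebius_partial_coprime k p n / real p
      + (if a = 0 then moebius_partial k n - moebius_partial_coprime k p n else 0)"
proof -
  have "(\<Sum>d | d \<in> {1..n} \<and> \<not> p dvd d. moebius_mu d / real d ^ k * residue_weight p a d)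
      = moebius_partial_coprime k p n / real p"
    by (simp add: moebius_partial_coprime_def residue_weight_def sum_divide_distrib)
  moreover have "(\<Sum>d | d \<in> {1..n} \<and> p dvd d. moebius_mu d / real d ^ k * residue_weight p a d)
      = (if a = 0 then moebius_partial k n - moebius_partial_coprime k p n else 0)"
    using sum_atLeastAtMost_split_dvd[of "\<lambda>d. moebius_mu d / real d ^ k" n p]
    by (simp add: moebius_partial_def moebius_partial_coprime_def residue_weight_def)
  ultimately show ?thesis
    using sum_atLeastAtMost_split_dvd[of "\<lambda>d. moebius_mu d / real d ^ k * residue_weight p a d" n p]
    by simp
qed

lemma abs_real_div_minus_divide_le:
  fixes n d :: nat
  assumes "d > 0"
  shows "\<bar>real (n div d) - real n / real d\<bar> \<le> 1"
proof -
  have "real n = real d * real (n div d) + real (n mod d)"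
    by (metis of_nat_add of_nat_mult mult_div_mod_eq)
  then have "real n / real d = real (n div d) + real (n mod d) / real d"
    using assms by (simp add: field_simps)
  moreover have "real (n mod d) / real d \<le> 1" using assms by simp
  ultimately show ?thesis by simp
qed

lemma card_mult_mod_eq_div_approx:
  fixes p d a n :: nat
  assumes p: "prime p" and a: "a < p" and d: "d > 0"
  shows "\<bar>real (card {j \<in> {1..n div d}. (d * j) mod p = a}) - real n / real d * residue_weight p a d\<bar> \<le> 2"
proof -
  have w: "0 \<le> residue_weight p a d" "residue_weight p a d \<le> 1"
    using prime_gt_0_nat[OF p] by (auto simp: residue_weight_def)
  have "\<bar>real (n div d) * residue_weight p a d - real n / real d * residue_weight p a d\<bar>
      = \<bar>(real (n div d) - real n / real d) * residue_weight p a d\<bar>"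
    by (simp only: left_diff_distrib)
  also have "\<dots> = \<bar>real (n div d) - real n / real d\<bar> * residue_weight p a d"
    using w by (simp add: abs_mult)
  also have "\<dots> \<le> 1 * 1"
    using abs_real_div_minus_divide_le[OF d, of n] w by (intro mult_mono) auto
  finally show ?thesis
    using card_mult_mod_eq_approx[OF p a, where d = d and m = "n div d"] by linarith
qed

lemma sum_moebius_residue_weight_approx:
  assumes k: "k \<ge> 2" and p: "prime p" and n: "n \<ge> 1"
  shows "\<bar>(\<Sum>d=1..n. moebius_mu d / real d ^ k * residue_weight p a d) - residue_density k p a\<bar>
    \<le> 20 / sqrt (real n)"
proof -
  define e1 where "e1 = moebius_partial_coprime k p n - moebius_coprime_series k p"
  define e2 where "e2 = moebius_partial k n - 1 / zeta_nat k"
  define s where "s = 1 / sqrt (real n)"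
  have e: "\<bar>e1\<bar> \<le> 8 * s" "\<bar>e2\<bar> \<le> 4 * s" "s \<ge> 0"
    unfolding e1_def e2_def s_def
    using moebius_partial_coprime_approx[OF k p n] moebius_partial_approx[OF k n] by auto
  have "\<bar>e1 / real p\<bar> \<le> \<bar>e1\<bar>"
    using prime_ge_2_nat[OF p] by (simp add: abs_divide divide_le_eq mult_le_cancel_left1)
  moreover have "(\<Sum>d=1..n. moebius_mu d / real d ^ k * residue_weight p a d) - residue_density k p a
      = e1 / real p + (if a = 0 then e2 - e1 else 0)"
    unfolding sum_moebius_residue_weight residue_density_eq[OF k p] e1_def e2_def
    by (simp add: diff_divide_distrib)
  ultimately have "\<bar>(\<Sum>d=1..n. moebius_mu d / real d ^ k * residue_weight p a d) - residue_density k p a\<bar>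
      \<le> 20 * s"
    using e abs_triangle_ineq[of "e1 / real p" "e2 - e1"] abs_triangle_ineq4[of e2 e1]
    by (cases "a = 0") (simp_all del: abs_divide)
  then show ?thesis by (simp add: s_def)
qed

lemma sum_moebius_card_mult_mod_eq_approx:
  assumes k: "k \<ge> 2" and p: "prime p" and a: "a < p"
  shows "\<bar>(\<Sum>d=1..n. moebius_mu d / real d ^ (k - 1) * real (card {j \<in> {1..n div d}. (d * j) mod p = a}))
      - real n * (\<Sum>d=1..n. moebius_mu d / real d ^ k * residue_weight p a d)\<bar> \<le> 2 * harm n"
proof -
  have "\<bar>moebius_mu d / real d ^ (k - 1) * real (card {j \<in> {1..n div d}. (d * j) mod p = a})
      - real n * (moebius_mu d / real d ^ k * residue_weight p a d)\<bar> \<le> 2 * (1 / real d)"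
    if d: "d \<in> {1..n}" for d
  proof -
    let ?c = "real (card {j \<in> {1..n div d}. (d * j) mod p = a})"
    have "real d ^ k = real d ^ (k - 1) * real d"
      using k by (simp flip: power_Suc2)
    then have "moebius_mu d / real d ^ (k - 1) * ?c - real n * (moebius_mu d / real d ^ k * residue_weight p a d)
        = moebius_mu d / real d ^ (k - 1) * (?c - real n / real d * residue_weight p a d)"
      using d by (simp add: field_simps)
    also have "\<bar>\<dots>\<bar> \<le> 1 / real d ^ (k - 1) * 2"
      unfolding abs_mult abs_divide power_abs abs_of_nat
      using abs_moebius_mu_le[of d] card_mult_mod_eq_div_approx[OF p a, of d n] d
      by (intro mult_mono divide_right_mono) auto
    also have "\<dots> \<le> 1 / real d * 2"
      using d k by (intro mult_right_mono divide_left_mono) (auto intro: power_increasing[of 1, simplified])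
    finally show ?thesis by simp
  qed
  then have "\<bar>(\<Sum>d=1..n. moebius_mu d / real d ^ (k - 1) * real (card {j \<in> {1..n div d}. (d * j) mod p = a}))
      - real n * (\<Sum>d=1..n. moebius_mu d / real d ^ k * residue_weight p a d)\<bar>
      \<le> (\<Sum>d=1..n. 2 * (1 / real d))"
    by (simp only: sum_distrib_left flip: sum_subtractf) (intro order_trans[OF sum_abs] sum_mono)
  also have "\<dots> = 2 * harm n"
    by (simp add: harm_def sum_distrib_left inverse_eq_divide)
  finally show ?thesis .
qed

lemma sum_visible_density_residue_class:
  assumes k: "k \<ge> 2" and p: "prime p" and a: "a < p" and n: "n \<ge> 1"
  shows "\<bar>(\<Sum>i | i \<in> {1..n} \<and> i mod p = a. visible_density k i) - real n * residue_density k p a\<bar>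
    \<le> 2 * harm n + 20 * sqrt (real n)"
proof -
  let ?S = "\<Sum>d=1..n. moebius_mu d / real d ^ k * residue_weight p a d"
  have "(\<Sum>i | i \<in> {1..n} \<and> i mod p = a. visible_density k i)
      = (\<Sum>d=1..n. moebius_mu d / real d ^ (k - 1) * real (card {j \<in> {1..n div d}. (d * j) mod p = a}))"
    unfolding visible_density_def by (subst sum_sum_divisors_swap) (simp add: mult.commute)
  moreover have "\<bar>real n * ?S - real n * residue_density k p a\<bar> = real n * \<bar>?S - residue_density k p a\<bar>"
    by (simp add: abs_mult flip: right_diff_distrib)
  moreover have "real n * \<bar>?S - residue_density k p a\<bar> \<le> real n * (20 / sqrt (real n))"
    using sum_moebius_residue_weight_approx[OF k p n, of a] by (intro mult_left_mono) auto
  moreover have "real n * (20 / sqrt (real n)) = 20 * sqrt (real n)"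
    by (simp add: real_div_sqrt flip: times_divide_eq_left)
  ultimately show ?thesis
    using sum_moebius_card_mult_mod_eq_approx[OF k p a, of n] by linarith
qed

section \<open>The random walk\<close>

lemma
  assumes "valid_type k \<alpha>"
  shows pmf_step_index: "pmf (step_index_pmf \<alpha>) j = (if j < k then \<alpha> ! j else 0)"
    and set_pmf_step_index: "set_pmf (step_index_pmf \<alpha>) \<subseteq> {..<k}"
proof -
  let ?f = "\<lambda>j. if j < length \<alpha> then \<alpha> ! j else 0"
  have len: "length \<alpha> = k" and pos: "\<And>x. x \<in> set \<alpha> \<Longrightarrow> 0 < x" and sum: "sum_list \<alpha> = 1"
    using assms unfolding valid_type_def by auto
  have nonneg: "0 \<le> ?f j" for j
    using pos by (auto simp: less_imp_le)
  have "(\<integral>\<^sup>+x. ennreal (?f x) \<partial>count_space UNIV) = (\<Sum>x<length \<alpha>. ennreal (?f x))"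
    by (rule nn_integral_count_space') auto
  also have "\<dots> = ennreal (\<Sum>x<length \<alpha>. ?f x)"
    using nonneg by (intro sum_ennreal) blast
  also have "(\<Sum>x<length \<alpha>. ?f x) = sum_list \<alpha>"
    by (simp add: sum_list_sum_nth atLeast0LessThan)
  finally have "(\<integral>\<^sup>+x. ennreal (?f x) \<partial>count_space UNIV) = 1"
    using sum by simp
  then have pmf: "pmf (step_index_pmf \<alpha>) j = ?f j" for j
    unfolding step_index_pmf_def by (rule pmf_embed_pmf[OF nonneg])
  then show "pmf (step_index_pmf \<alpha>) j = (if j < k then \<alpha> ! j else 0)"
    using len by simp
  show "set_pmf (step_index_pmf \<alpha>) \<subseteq> {..<k}"
    using pmf len by (auto simp: set_pmf_eq split: if_splits)
qed

lemma expectation_step_index: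
  fixes g :: "nat \<Rightarrow> 'b::{banach, second_countable_topology}"
  assumes "valid_type k \<alpha>"
  shows "measure_pmf.expectation (step_index_pmf \<alpha>) g = (\<Sum>j<k. (\<alpha> ! j) *\<^sub>R g j)"
  using set_pmf_step_index[OF assms]
  by (subst integral_measure_pmf[of "{..<k}"]) (auto simp: pmf_step_index[OF assms])

lemma sum_list_update_add:
  fixes xs :: "'a::comm_monoid_add list"
  shows "j < length xs \<Longrightarrow> sum_list (xs[j := xs ! j + c]) = sum_list xs + c"
  by (induction xs arbitrary: j) (auto simp: algebra_simps split: nat.split)

definition simplex_points :: "nat \<Rightarrow> nat \<Rightarrow> int list set" where
  "simplex_points k i = {p. length p = k \<and> set p \<subseteq> {0..int i} \<and> sum_list p = int i}"

lemma finite_simplex_points: "finite (simplex_points k i)"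
  by (rule finite_subset[OF _ finite_lists_length_eq[of "{0..int i}" k]])
    (auto simp: simplex_points_def)

lemma simplex_points_step:
  assumes "p \<in> simplex_points k i" and "j < k"
  shows "p[j := p ! j + 1] \<in> simplex_points k (Suc i)"
proof -
  have "p ! j \<in> set p" "set p \<subseteq> {0..int i}" "length p = k" "sum_list p = int i"
    using assms by (simp_all add: simplex_points_def)
  then have "insert (p ! j + 1) (set p) \<subseteq> {0..int (Suc i)}" by auto
  then have "set (p[j := p ! j + 1]) \<subseteq> {0..int (Suc i)}"
    by (rule order_trans[OF set_update_subset_insert])
  then show ?thesis
    using assms(2) \<open>length p = k\<close> \<open>sum_list p = int i\<close>
    by (simp add: simplex_points_def sum_list_update_add)
qed

locale lattice_walk =
  fixes k :: nat and \<sigma> :: "nat \<Rightarrow> real list"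
  assumes valid_step_types: "\<And>j. j \<ge> 1 \<Longrightarrow> valid_type k (\<sigma> j)"
begin

abbreviation walk :: "nat \<Rightarrow> int list pmf" where
  "walk i \<equiv> walk_pmf k \<sigma> i"

lemma set_pmf_walk: "set_pmf (walk i) \<subseteq> simplex_points k i"
proof (induction i)
  case 0
  then show ?case by (auto simp: simplex_points_def sum_list_replicate)
next
  case (Suc i)
  have "j < k" if "j \<in> set_pmf (step_index_pmf (\<sigma> (Suc i)))" for j
    using that set_pmf_step_index[OF valid_step_types[of "Suc i"]] by auto
  then show ?case
    using Suc by (auto intro: simplex_points_step)
qed

lemma expectation_walk:
  fixes f :: "int list \<Rightarrow> 'b::{banach, second_countable_topology}"
  shows "measure_pmf.expectation (walk i) f = (\<Sum>p\<in>simplex_points k i. pmf (walk i) p *\<^sub>R f p)"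
  using set_pmf_walk finite_simplex_points by (intro integral_measure_pmf) auto

lemma expectation_walk_Suc:
  fixes h :: "int list \<Rightarrow> 'b::{banach, second_countable_topology}"
  shows "measure_pmf.expectation (walk (Suc i)) h =
    (\<Sum>p\<in>simplex_points k i. pmf (walk i) p *\<^sub>R (\<Sum>j<k. (\<sigma> (Suc i) ! j) *\<^sub>R h (p[j := p ! j + 1])))"
proof -
  have valid: "valid_type k (\<sigma> (Suc i))" by (rule valid_step_types) simp
  have "measure_pmf.expectation (walk (Suc i)) h = (\<Sum>p\<in>simplex_points k i. pmf (walk i) p *\<^sub>R
      measure_pmf.expectation (map_pmf (\<lambda>j. p[j := p ! j + 1]) (step_index_pmf (\<sigma> (Suc i)))) h)"
    unfolding walk_pmf.simps
    using finite_simplex_points set_pmf_walk set_pmf_step_index[OF valid]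
    by (intro pmf_expectation_bind) (auto intro: finite_subset)
  then show ?thesis
    by (simp add: expectation_step_index[OF valid])
qed

end

lemma visible_indicator_eq_sum_moebius:
  assumes p: "p \<in> simplex_points k i" and i: "i \<ge> 1"
  shows "(if visible p then 1 else 0) = (\<Sum>d | d dvd i. moebius_mu d * (if \<forall>x\<in>set p. int d dvd x then 1 else 0))"
proof -
  define g where "g = nat (Gcd (set p))"
  have dvd_all_iff: "(\<forall>x\<in>set p. int d dvd x) \<longleftrightarrow> d dvd g" for d
    by (simp add: g_def dvd_Gcd_iff flip: int_dvd_int_iff)
  have "sum_list p = int i" using p by (simp add: simplex_points_def)
  moreover have "Gcd (set p) dvd sum_list p"
    by (induction p) (auto intro: dvd_add Gcd_dvd)
  ultimately have "g dvd i" by (simp add: g_def flip: int_dvd_int_iff)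
  then have "g \<noteq> 0" using i by auto
  have "(\<Sum>d | d dvd i. moebius_mu d * (if \<forall>x\<in>set p. int d dvd x then 1 else 0))
      = (\<Sum>d | d dvd i \<and> d dvd g. moebius_mu d)"
    using i sum.inter_filter[of "{d. d dvd i}" moebius_mu "\<lambda>d. d dvd g"]
    by (simp add: dvd_all_iff) (rule sum.cong, auto)
  also have "{d. d dvd i \<and> d dvd g} = {d. d dvd g}"
    using \<open>g dvd i\<close> by (auto intro: dvd_trans)
  also have "(\<Sum>d | d dvd g. moebius_mu d) = (if g = 1 then 1 else 0)"
    using \<open>g \<noteq> 0\<close> by (simp add: sum_moebius_mu_divisors)
  also have "g = 1 \<longleftrightarrow> visible p"
    by (simp add: visible_def g_def nat_eq_iff)
  finally show ?thesis ..
qed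

context lattice_walk
begin

definition prob_all_dvd :: "nat \<Rightarrow> nat \<Rightarrow> real" where
  "prob_all_dvd i d = measure_pmf.expectation (walk i) (\<lambda>p. if \<forall>x\<in>set p. int d dvd x then 1 else 0)"

lemma EXvis_eq_sum_moebius:
  assumes "i \<ge> 1"
  shows "EXvis k \<sigma> i = (\<Sum>d | d dvd i. moebius_mu d * prob_all_dvd i d)"
proof -
  have "EXvis k \<sigma> i = (\<Sum>p\<in>simplex_points k i. pmf (walk i) p *
      (\<Sum>d | d dvd i. moebius_mu d * (if \<forall>x\<in>set p. int d dvd x then 1 else 0)))"
    unfolding EXvis_def expectation_walk
    by (intro sum.cong refl) (simp add: visible_indicator_eq_sum_moebius[OF _ assms])
  also have "\<dots> = (\<Sum>d | d dvd i. moebius_mu d * prob_all_dvd i d)"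
    unfolding prob_all_dvd_def expectation_walk
    by (simp add: sum_distrib_left sum.swap[of _ "simplex_points k i"] algebra_simps)
  finally show ?thesis .
qed

end

section \<open>Fourier expansion modulo d\<close>

definition e2pi :: "real \<Rightarrow> complex" where
  "e2pi x = cis (2 * pi * x)"

lemma e2pi_0 [simp]: "e2pi 0 = 1"
  by (simp add: e2pi_def)

lemma e2pi_add: "e2pi (x + y) = e2pi x * e2pi y"
  by (simp add: e2pi_def cis_mult distrib_left)

lemma norm_e2pi [simp]: "norm (e2pi x) = 1"
  by (simp add: e2pi_def)

lemma e2pi_of_int [simp]: "e2pi (of_int n) = 1"
  unfolding e2pi_def by (rule cis_multiple_2pi) simp

lemma e2pi_of_nat [simp]: "e2pi (of_nat n) = 1"
  using e2pi_of_int[of "int n"] by simp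

lemma e2pi_add_1: "e2pi (x + 1) = e2pi x"
  using e2pi_add[of x 1] e2pi_of_nat[of 1] by simp

lemma e2pi_power: "e2pi x ^ n = e2pi (real n * x)"
  unfolding e2pi_def Complex.DeMoivre by (rule arg_cong[where f = cis]) simp

lemma e2pi_sum: "e2pi (\<Sum>i\<in>A. f i) = (\<Prod>i\<in>A. e2pi (f i))"
  by (induction A rule: infinite_finite_induct) (simp_all add: e2pi_add)

lemma e2pi_eq_1_iff: "e2pi x = 1 \<longleftrightarrow> x \<in> \<int>"
proof
  assume "e2pi x = 1"
  then have "cos (2 * pi * x) = 1"
    unfolding e2pi_def by (metis cis.sel(1) one_complex.sel(1))
  then obtain n :: int where "2 * pi * x = real_of_int n * 2 * pi"
    using cos_one_2pi_int by blast
  then show "x \<in> \<int>" by simp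
qed (auto elim: Ints_cases)

lemma sum_e2pi_multiples:
  fixes x :: int and d :: nat
  assumes "d > 0"
  shows "(\<Sum>s<d. e2pi (real s * real_of_int x / real d)) = (if int d dvd x then of_nat d else 0)"
proof -
  let ?w = "e2pi (real_of_int x / real d)"
  have powers: "e2pi (real s * real_of_int x / real d) = ?w ^ s" for s
    by (simp add: e2pi_power)
  have "?w = 1 \<longleftrightarrow> int d dvd x"
  proof
    assume "?w = 1"
    then obtain n :: int where "real_of_int x / real d = real_of_int n"
      by (auto simp: e2pi_eq_1_iff elim: Ints_cases)
    then have "real_of_int x = real_of_int (int d * n)"
      using assms by (simp add: field_simps)
    then have "x = int d * n" by (simp only: of_int_eq_iff)
    then show "int d dvd x" ..
  next
    assume "int d dvd x"
    then obtain n where "x = int d * n" ..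
    then show "?w = 1" using assms by simp
  qed
  moreover have "?w ^ d = 1"
    using assms by (simp add: e2pi_power)
  ultimately show ?thesis
    by (auto simp: powers sum_gp_strict)
qed

definition residue_lists :: "nat \<Rightarrow> nat \<Rightarrow> nat list set" where
  "residue_lists k d = {t. length t = k \<and> set t \<subseteq> {..<d}}"

lemma residue_lists_Suc: "residue_lists (Suc k) d = (\<lambda>(s, t). s # t) ` ({..<d} \<times> residue_lists k d)"
  unfolding residue_lists_def by (auto simp: image_iff length_Suc_conv split: prod.splits)

lemma finite_residue_lists: "finite (residue_lists k d)"
  by (induction k) (simp_all add: residue_lists_Suc, simp add: residue_lists_def)

lemma prod_sum_residue_lists:
  fixes g :: "nat \<Rightarrow> nat \<Rightarrow> 'a::comm_semiring_1"
  shows "(\<Prod>m<k. \<Sum>s<d. g m s) = (\<Sum>t\<in>residue_lists k d. \<Prod>m<k. g m (t ! m))"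
proof (induction k arbitrary: g)
  case 0
  have "residue_lists 0 d = {[]}" by (auto simp: residue_lists_def)
  then show ?case by simp
next
  case (Suc k)
  have "(\<Prod>m<Suc k. \<Sum>s<d. g m s) = (\<Sum>s<d. g 0 s) * (\<Sum>t\<in>residue_lists k d. \<Prod>m<k. g (Suc m) (t ! m))"
    unfolding prod.lessThan_Suc_shift using Suc[of "\<lambda>m. g (Suc m)"] by simp
  also have "\<dots> = (\<Sum>(s, t)\<in>{..<d} \<times> residue_lists k d. \<Prod>m<Suc k. g m ((s # t) ! m))"
    by (simp add: sum_product sum.cartesian_product prod.lessThan_Suc_shift del: prod.lessThan_Suc)
  also have "\<dots> = (\<Sum>t\<in>residue_lists (Suc k) d. \<Prod>m<Suc k. g m (t ! m))"
    unfolding residue_lists_Suc by (subst sum.reindex) (auto simp: inj_on_def case_prod_beta)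
  finally show ?case .
qed

definition pairing :: "nat \<Rightarrow> nat list \<Rightarrow> int list \<Rightarrow> real" where
  "pairing k t p = (\<Sum>m<k. real (t ! m) * real_of_int (p ! m))"

lemma pairing_update:
  assumes "length p = k" and "j < k"
  shows "pairing k t (p[j := p ! j + 1]) = pairing k t p + real (t ! j)"
proof -
  have "pairing k t (p[j := p ! j + 1])
      = (\<Sum>m<k. real (t ! m) * real_of_int (p ! m) + (if m = j then real (t ! j) else 0))"
    unfolding pairing_def using assms by (intro sum.cong refl) (auto simp: nth_list_update algebra_simps)
  also have "\<dots> = pairing k t p + real (t ! j)"
    unfolding pairing_def using assms by (simp add: sum.distrib)
  finally show ?thesis .
qed

lemma indicator_all_dvd_fourier:
  assumes d: "d > 0" and len: "length p = k"
  shows "(if \<forall>x\<in>set p. int d dvd x then 1 else 0 :: complex)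
    = (\<Sum>t\<in>residue_lists k d. e2pi (pairing k t p / real d)) / of_nat d ^ k"
proof -
  have "(if \<forall>x\<in>set p. int d dvd x then 1 else 0 :: complex) = (\<Prod>m<k. if int d dvd p ! m then 1 else 0)"
    using len by (auto simp: all_set_conv_all_nth)
  also have "\<dots> = (\<Prod>m<k. (\<Sum>s<d. e2pi (real s * real_of_int (p ! m) / real d)) / of_nat d)"
    using d by (auto simp: sum_e2pi_multiples intro!: prod.cong)
  also have "\<dots> = (\<Sum>t\<in>residue_lists k d. \<Prod>m<k. e2pi (real (t ! m) * real_of_int (p ! m) / real d))
      / of_nat d ^ k"
    by (simp add: prod_dividef prod_sum_residue_lists)
  also have "\<dots> = (\<Sum>t\<in>residue_lists k d. e2pi (pairing k t p / real d)) / of_nat d ^ k"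
    by (simp add: pairing_def e2pi_sum sum_divide_distrib)
  finally show ?thesis .
qed

context lattice_walk
begin

definition step_char :: "real list \<Rightarrow> nat \<Rightarrow> nat list \<Rightarrow> complex" where
  "step_char \<alpha> d t = (\<Sum>m<k. (\<alpha> ! m) *\<^sub>R e2pi (real (t ! m) / real d))"

definition walk_char :: "nat \<Rightarrow> nat \<Rightarrow> nat list \<Rightarrow> complex" where
  "walk_char i d t = measure_pmf.expectation (walk i) (\<lambda>p. e2pi (pairing k t p / real d))"

lemma walk_char_Suc: "walk_char (Suc i) d t = walk_char i d t * step_char (\<sigma> (Suc i)) d t"
proof -
  have "walk_char (Suc i) d t = (\<Sum>p\<in>simplex_points k i. pmf (walk i) p *\<^sub>R
      (\<Sum>j<k. (\<sigma> (Suc i) ! j) *\<^sub>R e2pi (pairing k t (p[j := p ! j + 1]) / real d)))"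
    unfolding walk_char_def by (rule expectation_walk_Suc)
  also have "\<dots> = (\<Sum>p\<in>simplex_points k i. pmf (walk i) p *\<^sub>R
      (e2pi (pairing k t p / real d) * step_char (\<sigma> (Suc i)) d t))"
    by (intro sum.cong refl)
      (simp add: simplex_points_def step_char_def pairing_update add_divide_distrib e2pi_add sum_distrib_left)
  also have "\<dots> = walk_char i d t * step_char (\<sigma> (Suc i)) d t"
    unfolding walk_char_def expectation_walk by (simp add: sum_distrib_right)
  finally show ?thesis .
qed

lemma walk_char_eq_prod: "walk_char i d t = (\<Prod>j=1..i. step_char (\<sigma> j) d t)"
proof (induction i)
  case 0
  have "pairing k t (replicate k 0) = 0" by (simp add: pairing_def)
  then show ?case by (simp add: walk_char_def)
next
  case (Suc i)
  then show ?case by (simp add: walk_char_Suc mult.commute)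
qed

lemma prob_all_dvd_fourier:
  assumes "d > 0"
  shows "complex_of_real (prob_all_dvd i d) = (\<Sum>t\<in>residue_lists k d. walk_char i d t) / of_nat d ^ k"
proof -
  have "complex_of_real (prob_all_dvd i d) = (\<Sum>p\<in>simplex_points k i.
      of_real (pmf (walk i) p) * (if \<forall>x\<in>set p. int d dvd x then 1 else 0))"
    unfolding prob_all_dvd_def expectation_walk by (auto simp: of_real_sum intro!: sum.cong)
  also have "\<dots> = (\<Sum>p\<in>simplex_points k i. \<Sum>t\<in>residue_lists k d.
      of_real (pmf (walk i) p) * e2pi (pairing k t p / real d) / of_nat d ^ k)"
    using assms by (intro sum.cong refl)
      (simp add: simplex_points_def indicator_all_dvd_fourier sum_distrib_left sum_divide_distrib)
  also have "\<dots> = (\<Sum>t\<in>residue_lists k d. walk_char i d t) / of_nat d ^ k"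
    unfolding walk_char_def expectation_walk
    by (subst sum.swap) (simp add: sum_divide_distrib scaleR_conv_of_real)
  finally show ?thesis .
qed

end

section \<open>Analytic estimates\<close>

lemma sum_sum_weighted_dist_sq:
  fixes z :: "nat \<Rightarrow> 'a::real_inner"
  assumes w: "(\<Sum>m<k. w m) = 1" and z: "\<And>m. norm (z m) = 1"
  shows "(\<Sum>m<k. \<Sum>l<k. w m * w l * norm (z m - z l) ^ 2) = 2 - 2 * norm (\<Sum>m<k. w m *\<^sub>R z m) ^ 2"
proof -
  have unit: "inner (z m) (z m) = 1" for m
    using z[of m] by (metis power2_norm_eq_inner power_one)
  have dist: "norm (z m - z l) ^ 2 = 2 - 2 * inner (z m) (z l)" for m l
    using unit[of m] unit[of l]
    by (simp add: power2_norm_eq_inner inner_diff_left inner_diff_right inner_commute)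
  have "norm (\<Sum>m<k. w m *\<^sub>R z m) ^ 2 = (\<Sum>m<k. \<Sum>l<k. w m * w l * inner (z m) (z l))"
    by (simp add: power2_norm_eq_inner inner_sum_left inner_sum_right sum_distrib_left mult.assoc mult.left_commute inner_commute)
  moreover have "(\<Sum>m<k. \<Sum>l<k. w m * w l) = 1"
    using w by (simp flip: sum_distrib_left sum_distrib_right)
  moreover have "(\<Sum>m<k. \<Sum>l<k. w m * w l * norm (z m - z l) ^ 2)
      = 2 * (\<Sum>m<k. \<Sum>l<k. w m * w l) - 2 * (\<Sum>m<k. \<Sum>l<k. w m * w l * inner (z m) (z l))"
    by (simp add: dist algebra_simps sum_subtractf sum_distrib_left)
  ultimately show ?thesis
    by (simp add: mult.assoc)
qed

lemma norm_convex_comb_unit_sq_le: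
  fixes z :: "nat \<Rightarrow> 'a::real_inner"
  assumes k: "k \<ge> 1" and w: "(\<Sum>m<k. w m) = 1" and wa: "\<And>m. m < k \<Longrightarrow> a \<le> w m" and a: "0 \<le> a"
    and z: "\<And>m. norm (z m) = 1"
  shows "norm (\<Sum>m<k. w m *\<^sub>R z m) ^ 2 \<le> 1 - a^2 * (\<Sum>m\<in>{1..<k}. norm (z m - z 0) ^ 2)"
proof -
  define f where "f m l = w m * w l * norm (z m - z l) ^ 2" for m l
  have w_nonneg: "0 \<le> w m" if "m < k" for m
    using wa[OF that] a by linarith
  have f_nonneg: "f m l \<ge> 0" if "m < k" "l < k" for m l
    using w_nonneg[OF that(1)] w_nonneg[OF that(2)] by (simp add: f_def)
  have f_ge: "a^2 * norm (z m - z 0) ^ 2 \<le> f m 0" "f 0 m = f m 0" if "m \<in> {1..<k}" for m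
  proof -
    have "a * a \<le> w m * w 0" using wa w_nonneg that k a by (intro mult_mono) auto
    then show "a^2 * norm (z m - z 0) ^ 2 \<le> f m 0"
      unfolding f_def power2_eq_square[of a] by (intro mult_right_mono) auto
    show "f 0 m = f m 0" by (simp add: f_def norm_minus_commute)
  qed
  have split: "{..<k} = insert 0 {1..<k}" using k by auto
  have "(\<Sum>m<k. \<Sum>l<k. f m l)
      = f 0 0 + (\<Sum>l\<in>{1..<k}. f 0 l) + (\<Sum>m\<in>{1..<k}. f m 0) + (\<Sum>m\<in>{1..<k}. \<Sum>l\<in>{1..<k}. f m l)"
    unfolding split by (simp add: sum.distrib)
  moreover have "0 \<le> f 0 0" "0 \<le> (\<Sum>m\<in>{1..<k}. \<Sum>l\<in>{1..<k}. f m l)"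
    using k by (auto intro!: f_nonneg sum_nonneg)
  moreover have "a^2 * (\<Sum>m\<in>{1..<k}. norm (z m - z 0) ^ 2) \<le> (\<Sum>m\<in>{1..<k}. f m 0)"
    "(\<Sum>l\<in>{1..<k}. f 0 l) = (\<Sum>m\<in>{1..<k}. f m 0)"
    using f_ge by (auto simp: sum_distrib_left intro!: sum_mono)
  ultimately have "2 * (a^2 * (\<Sum>m\<in>{1..<k}. norm (z m - z 0) ^ 2)) \<le> (\<Sum>m<k. \<Sum>l<k. f m l)"
    by linarith
  then show ?thesis
    using sum_sum_weighted_dist_sq[OF w z] by (simp add: f_def)
qed

lemma norm_convex_comb_unit_le_exp:
  fixes z :: "nat \<Rightarrow> 'a::real_inner"
  assumes "k \<ge> 1" and "(\<Sum>m<k. w m) = 1" and "\<And>m. m < k \<Longrightarrow> a \<le> w m" and "0 \<le> a"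
    and "\<And>m. norm (z m) = 1"
  shows "norm (\<Sum>m<k. w m *\<^sub>R z m) \<le> exp (- (a^2 / 2) * (\<Sum>m\<in>{1..<k}. norm (z m - z 0) ^ 2))"
proof -
  let ?S = "\<Sum>m\<in>{1..<k}. norm (z m - z 0) ^ 2"
  have "norm (\<Sum>m<k. w m *\<^sub>R z m) ^ 2 \<le> 1 - a^2 * ?S"
    by (rule norm_convex_comb_unit_sq_le[OF assms])
  also have "\<dots> \<le> exp (- (a^2 * ?S))"
    using exp_ge_add_one_self[of "- (a^2 * ?S)"] by simp
  also have "\<dots> = exp (- (a^2 / 2) * ?S) ^ 2"
    by (simp flip: exp_of_nat_mult)
  finally show ?thesis
    by (rule power2_le_imp_le) simp
qed

lemma sin_ge_third:
  fixes x :: real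
  assumes "0 \<le> x" and "x \<le> 2"
  shows "x / 3 \<le> sin x"
proof -
  have "\<bar>sin x - (\<Sum>m<3. sin_coeff m * x ^ m)\<bar> \<le> inverse (fact 3) * \<bar>x\<bar> ^ 3"
    by (rule Maclaurin_sin_bound)
  moreover have "(\<Sum>m<3. sin_coeff m * x ^ m) = x" "inverse (fact 3) * \<bar>x\<bar> ^ 3 = x ^ 3 / 6"
    using assms by (simp_all add: sin_coeff_def eval_nat_numeral)
  ultimately have "x - x ^ 3 / 6 \<le> sin x"
    unfolding abs_le_iff by linarith
  moreover have "x * x ^ 2 \<le> x * 2 ^ 2"
    using assms by (intro mult_left_mono power_mono) auto
  ultimately show ?thesis
    by (simp add: eval_nat_numeral)
qed

lemma norm_e2pi_minus_1_sq: "norm (e2pi x - 1) ^ 2 = 4 * sin (pi * x) ^ 2"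
proof -
  have "norm (e2pi x - 1) ^ 2 = (cos (2 * pi * x) - 1) ^ 2 + sin (2 * pi * x) ^ 2"
    by (simp add: e2pi_def cmod_power2)
  also have "\<dots> = 2 - 2 * cos (2 * pi * x)"
    by (simp add: power2_eq_square algebra_simps sin_squared_eq)
  also have "cos (2 * pi * x) = 1 - 2 * sin (pi * x) ^ 2"
    using cos_double_sin[of "pi * x"] by (simp add: mult.assoc)
  finally show ?thesis by simp
qed

lemma norm_e2pi_minus_1_sq_ge:
  fixes r d :: nat
  assumes d: "d > 0" and r: "r \<le> d"
  shows "4 * (real (min r (d - r)) / real d) ^ 2 \<le> norm (e2pi (real r / real d) - 1) ^ 2"
proof -
  define y where "y = real (min r (d - r)) / real d"
  have y: "0 \<le> y" "y \<le> 1 / 2"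
    using d r by (auto simp: y_def min_def field_simps)
  have "sin (pi * (real r / real d)) = sin (pi * y)"
  proof (cases "r \<le> d - r")
    case False
    then have "pi * (real r / real d) = pi - pi * y"
      using d r by (simp add: y_def min_def of_nat_diff field_simps)
    then show ?thesis by simp
  qed (simp add: y_def)
  moreover have "pi * y / 3 \<le> sin (pi * y)"
  proof (rule sin_ge_third)
    have "pi * y \<le> 4 * (1 / 2)" using y pi_less_4 by (intro mult_mono) auto
    then show "pi * y \<le> 2" by simp
  qed (use y in simp)
  moreover have "3 * y \<le> pi * y"
    using y pi_gt3 by (intro mult_right_mono) auto
  ultimately have "y \<le> sin (pi * (real r / real d))" by linarith
  then have "y ^ 2 \<le> sin (pi * (real r / real d)) ^ 2"
    using y by (intro power_mono) auto
  then show ?thesis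
    unfolding norm_e2pi_minus_1_sq y_def by simp
qed

lemma sum_inverse_square_tail:
  fixes T N :: nat
  assumes T: "T \<ge> 1"
  shows "(\<Sum>r\<in>{T<..N}. 1 / real r ^ 2) \<le> 1 / real T"
proof (cases "T \<le> N")
  case True
  have "(\<Sum>r\<in>{T<..N}. 1 / real r ^ 2) \<le> 1 / real T - 1 / real N"
    using True
  proof (induction N rule: dec_induct)
    case (step N)
    have "1 / real (Suc N) ^ 2 \<le> 1 / (real N * real (Suc N))"
      using step T by (intro divide_left_mono) (auto simp: power2_eq_square)
    also have "\<dots> = 1 / real N - 1 / real (Suc N)"
      using step T by (simp add: field_simps)
    finally show ?case
      using step by (simp add: atLeastSucAtMost_greaterThanAtMost[symmetric])
  qed simp
  moreover have "0 \<le> 1 / real N" by simp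
  ultimately show ?thesis by linarith
qed simp

lemma sum_gaussian_tail_le:
  fixes T N :: nat
  assumes \<mu>: "\<mu> > 0" and T: "T \<ge> 1"
  shows "(\<Sum>r\<in>{T<..N}. exp (- \<mu> * real r ^ 2)) \<le> 1 / (\<mu> * real T)"
proof -
  have "exp (- \<mu> * real r ^ 2) \<le> 1 / \<mu> * (1 / real r ^ 2)" if "r \<in> {T<..N}" for r
  proof -
    have pos: "\<mu> * real r ^ 2 > 0" using \<mu> that T by simp
    have "\<mu> * real r ^ 2 \<le> exp (\<mu> * real r ^ 2)"
      using exp_ge_add_one_self[of "\<mu> * real r ^ 2"] by linarith
    then show ?thesis
      using pos by (simp add: exp_minus field_simps)
  qed
  then have "(\<Sum>r\<in>{T<..N}. exp (- \<mu> * real r ^ 2)) \<le> (\<Sum>r\<in>{T<..N}. 1 / \<mu> * (1 / real r ^ 2))"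
    by (rule sum_mono)
  also have "\<dots> = 1 / \<mu> * (\<Sum>r\<in>{T<..N}. 1 / real r ^ 2)"
    by (simp add: sum_distrib_left)
  also have "\<dots> \<le> 1 / \<mu> * (1 / real T)"
    using \<mu> sum_inverse_square_tail[OF T] by (intro mult_left_mono) auto
  finally show ?thesis by simp
qed

lemma sum_gaussian_le:
  assumes \<mu>: "\<mu> > 0"
  shows "(\<Sum>r=1..N. exp (- \<mu> * real r ^ 2)) \<le> 3 / sqrt \<mu>"
proof (cases "\<mu> \<ge> 1")
  case True
  have "(\<Sum>r=1..N. exp (- \<mu> * real r ^ 2)) \<le> (\<Sum>r\<in>insert 1 {1<..N}. exp (- \<mu> * real r ^ 2))"
    by (rule sum_mono2) auto
  also have "\<dots> = exp (- \<mu>) + (\<Sum>r\<in>{1<..N}. exp (- \<mu> * real r ^ 2))"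
    by simp
  also have "\<dots> \<le> 1 / \<mu> + 1 / \<mu>"
  proof (rule add_mono)
    have "\<mu> \<le> exp \<mu>" using exp_ge_add_one_self[of \<mu>] by linarith
    then show "exp (- \<mu>) \<le> 1 / \<mu>" using \<mu> by (simp add: exp_minus field_simps)
  qed (use sum_gaussian_tail_le[OF \<mu>, of 1 N] in simp)
  also have "\<dots> \<le> 3 / sqrt \<mu>"
    using True real_sqrt_le_iff[of \<mu> "\<mu> ^ 2"] by (simp add: power2_eq_square field_simps)
  finally show ?thesis .
next
  case False
  define T where "T = nat \<lceil>1 / sqrt \<mu>\<rceil>"
  have s: "0 < sqrt \<mu>" "sqrt \<mu> \<le> 1" using \<mu> False by auto
  then have "1 \<le> 1 / sqrt \<mu>" by simp
  then have T: "1 / sqrt \<mu> \<le> real T" "real T \<le> 1 / sqrt \<mu> + 1" "T \<ge> 1"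
    unfolding T_def by linarith+
  have "(\<Sum>r=1..N. exp (- \<mu> * real r ^ 2)) \<le> (\<Sum>r\<in>{1..T} \<union> {T<..N}. exp (- \<mu> * real r ^ 2))"
    by (intro sum_mono2) auto
  also have "\<dots> = (\<Sum>r=1..T. exp (- \<mu> * real r ^ 2)) + (\<Sum>r\<in>{T<..N}. exp (- \<mu> * real r ^ 2))"
    by (intro sum.union_disjoint) auto
  also have "\<dots> \<le> real T + 1 / (\<mu> * real T)"
    using sum_gaussian_tail_le[OF \<mu> T(3)] \<mu> sum_bounded_above[of "{1..T}" "\<lambda>r. exp (- \<mu> * real r ^ 2)" 1]
    by (intro add_mono) auto
  also have "1 / (\<mu> * real T) \<le> 1 / sqrt \<mu>"
  proof -
    have "sqrt \<mu> = \<mu> * (1 / sqrt \<mu>)"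
      using s by (simp add: field_simps)
    also have "\<dots> \<le> \<mu> * real T"
      using T \<mu> by (intro mult_left_mono) auto
    finally show ?thesis
      using s T(3) \<mu> by (intro divide_left_mono mult_pos_pos) auto
  qed
  finally show ?thesis
    using T \<open>1 \<le> 1 / sqrt \<mu>\<close> by simp
qed

lemma power_minus_one_le:
  fixes x :: real
  assumes "x \<ge> 1"
  shows "x ^ n - 1 \<le> real n * x ^ (n - 1) * (x - 1)"
proof -
  have "(\<Sum>i<n. x ^ i) \<le> (\<Sum>i<n. x ^ (n - 1))"
    using assms by (intro sum_mono power_increasing) auto
  then have "(x - 1) * (\<Sum>i<n. x ^ i) \<le> (x - 1) * (real n * x ^ (n - 1))"
    using assms by (intro mult_left_mono) auto
  then show ?thesis
    by (simp add: power_diff_1_eq algebra_simps)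
qed

lemma e2pi_mod:
  fixes m d :: nat
  assumes "d > 0"
  shows "e2pi (real (m mod d) / real d) = e2pi (real m / real d)"
proof -
  have "real m / real d = real (m mod d) / real d + real_of_int (int (m div d))"
    using assms by (simp add: field_simps flip: of_nat_mult of_nat_add)
  then show ?thesis by (simp add: e2pi_add)
qed

lemma sum_e2pi_shift:
  fixes s d :: nat
  assumes d: "d > 0" and s: "s < d"
  shows "(\<Sum>r<d. h (norm (e2pi (real r / real d) - e2pi (real s / real d))))
    = (\<Sum>r<d. h (norm (e2pi (real r / real d) - 1)))"
proof -
  have inverse: "((r + (d - s)) mod d + s) mod d = r" "((r + s) mod d + (d - s)) mod d = r"
    if "r < d" for r
  proof -
    have "((r + (d - s)) mod d + s) mod d = (r + (d - s) + s) mod d"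
      "((r + s) mod d + (d - s)) mod d = (r + s + (d - s)) mod d"
      by (rule mod_add_left_eq)+
    moreover have "r + (d - s) + s = r + d" "r + s + (d - s) = r + d" using s by simp_all
    ultimately show "((r + (d - s)) mod d + s) mod d = r" "((r + s) mod d + (d - s)) mod d = r"
      using that by simp_all
  qed
  show ?thesis
  proof (rule sum.reindex_bij_witness[where i = "\<lambda>r. (r + s) mod d" and j = "\<lambda>r. (r + (d - s)) mod d"])
    fix r assume r: "r \<in> {..<d}"
    have "real s / real d + real (r + (d - s)) / real d = real r / real d + 1"
      using s d by (simp add: of_nat_diff field_simps)
    then have "e2pi (real r / real d) = e2pi (real s / real d) * e2pi (real (r + (d - s)) / real d)"
      by (simp add: e2pi_add_1 flip: e2pi_add)
    then have "e2pi (real r / real d) - e2pi (real s / real d)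
        = e2pi (real s / real d) * (e2pi (real ((r + (d - s)) mod d) / real d) - 1)"
      using d by (simp add: e2pi_mod algebra_simps)
    then show "h (norm (e2pi (real ((r + (d - s)) mod d) / real d) - 1))
        = h (norm (e2pi (real r / real d) - e2pi (real s / real d)))"
      by (simp add: norm_mult)
  qed (use d inverse in auto)
qed

definition gauss_residue_sum :: "real \<Rightarrow> nat \<Rightarrow> real" where
  "gauss_residue_sum l d = (\<Sum>r<d. exp (- l * norm (e2pi (real r / real d) - 1) ^ 2))"

lemma gauss_residue_sum_eq_1_plus:
  assumes "d > 0"
  shows "gauss_residue_sum l d = 1 + (\<Sum>r\<in>{1..<d}. exp (- l * norm (e2pi (real r / real d) - 1) ^ 2))"
proof -
  have "{..<d} = insert 0 {1..<d}" using assms by auto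
  then show ?thesis by (simp add: gauss_residue_sum_def)
qed

lemma gauss_residue_sum_ge_1: "d > 0 \<Longrightarrow> 1 \<le> gauss_residue_sum l d"
  by (simp add: gauss_residue_sum_eq_1_plus sum_nonneg)

lemma gauss_residue_sum_le:
  assumes "0 \<le> l"
  shows "gauss_residue_sum l d \<le> real d"
proof -
  have "gauss_residue_sum l d \<le> (\<Sum>r<d. 1)"
    unfolding gauss_residue_sum_def using assms by (intro sum_mono) simp
  then show ?thesis by simp
qed

lemma gauss_residue_sum_minus_1_le:
  assumes d: "d > 0" and l: "l > 0"
  shows "gauss_residue_sum l d - 1 \<le> 3 * real d / sqrt l"
proof -
  define \<mu> where "\<mu> = 4 * l / real d ^ 2"
  have \<mu>: "\<mu> > 0" using l d by (simp add: \<mu>_def)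
  have "exp (- l * norm (e2pi (real r / real d) - 1) ^ 2)
      \<le> exp (- \<mu> * real r ^ 2) + exp (- \<mu> * real (d - r) ^ 2)" if "r \<in> {1..<d}" for r
  proof -
    have "exp (- l * norm (e2pi (real r / real d) - 1) ^ 2) \<le> exp (- l * (4 * (real (min r (d - r)) / real d) ^ 2))"
      using norm_e2pi_minus_1_sq_ge[OF d, of r] that l by simp
    also have "\<dots> = exp (- \<mu> * real (min r (d - r)) ^ 2)"
      by (simp add: \<mu>_def power_divide)
    also have "\<dots> \<le> exp (- \<mu> * real r ^ 2) + exp (- \<mu> * real (d - r) ^ 2)"
      by (simp add: min_def)
    finally show ?thesis .
  qed
  then have "(\<Sum>r\<in>{1..<d}. exp (- l * norm (e2pi (real r / real d) - 1) ^ 2))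
      \<le> (\<Sum>r\<in>{1..<d}. exp (- \<mu> * real r ^ 2) + exp (- \<mu> * real (d - r) ^ 2))"
    by (rule sum_mono)
  then have "gauss_residue_sum l d - 1
      \<le> (\<Sum>r\<in>{1..<d}. exp (- \<mu> * real r ^ 2)) + (\<Sum>r\<in>{1..<d}. exp (- \<mu> * real (d - r) ^ 2))"
    by (simp add: gauss_residue_sum_eq_1_plus[OF d] sum.distrib)
  also have "(\<Sum>r\<in>{1..<d}. exp (- \<mu> * real (d - r) ^ 2)) = (\<Sum>r\<in>{1..<d}. exp (- \<mu> * real r ^ 2))"
    by (rule sum.reindex_bij_witness[where i = "\<lambda>r. d - r" and j = "\<lambda>r. d - r"]) auto
  also have "(\<Sum>r\<in>{1..<d}. exp (- \<mu> * real r ^ 2)) \<le> (\<Sum>r=1..d. exp (- \<mu> * real r ^ 2))"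
    by (rule sum_mono2) auto
  also have "\<dots> \<le> 3 / sqrt \<mu>"
    by (rule sum_gaussian_le[OF \<mu>])
  also have "3 / sqrt \<mu> + 3 / sqrt \<mu> = 3 * real d / sqrt l"
    using d l by (simp add: \<mu>_def real_sqrt_divide real_sqrt_mult field_simps)
  finally show ?thesis by simp
qed

lemma sum_residue_lists_exp_anchored:
  assumes d: "d > 0"
  shows "(\<Sum>t\<in>residue_lists (Suc k) d.
      exp (- l * (\<Sum>m\<in>{1..<Suc k}. norm (e2pi (real (t ! m) / real d) - e2pi (real (t ! 0) / real d)) ^ 2)))
    = real d * gauss_residue_sum l d ^ k"
proof -
  let ?g = "\<lambda>s r. exp (- l * norm (e2pi (real r / real d) - e2pi (real s / real d)) ^ 2)"
  have "{1..<Suc k} = Suc ` {..<k}"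
    by (simp add: image_Suc_lessThan atLeastLessThanSuc_atLeastAtMost)
  then have anchored: "exp (- l * (\<Sum>m\<in>{1..<Suc k}. norm (e2pi (real ((s # t) ! m) / real d)
      - e2pi (real ((s # t) ! 0) / real d)) ^ 2)) = (\<Prod>m<k. ?g s (t ! m))" for s t
    by (simp add: sum.reindex sum_distrib_left exp_sum[symmetric])
  have "inj_on (\<lambda>(s, t). s # t) ({..<d} \<times> residue_lists k d)"
    by (auto simp: inj_on_def)
  then have "(\<Sum>t\<in>residue_lists (Suc k) d.
      exp (- l * (\<Sum>m\<in>{1..<Suc k}. norm (e2pi (real (t ! m) / real d) - e2pi (real (t ! 0) / real d)) ^ 2)))
      = (\<Sum>(s, t)\<in>{..<d} \<times> residue_lists k d. \<Prod>m<k. ?g s (t ! m))"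
    unfolding residue_lists_Suc sum.reindex[OF \<open>inj_on _ _\<close>] comp_def
    by (simp only: case_prod_beta anchored split_def)
  also have "\<dots> = (\<Sum>s<d. \<Sum>t\<in>residue_lists k d. \<Prod>m<k. ?g s (t ! m))"
    by (rule sum.cartesian_product[symmetric])
  also have "\<dots> = (\<Sum>s<d. \<Prod>m<k. \<Sum>r<d. ?g s r)"
    by (rule sum.cong[OF refl]) (rule prod_sum_residue_lists[symmetric])
  also have "\<dots> = (\<Sum>s<d. gauss_residue_sum l d ^ k)"
  proof (rule sum.cong[OF refl])
    fix s assume "s \<in> {..<d}"
    then have "(\<Sum>r<d. ?g s r) = gauss_residue_sum l d"
      unfolding gauss_residue_sum_def using sum_e2pi_shift[OF d, of s "\<lambda>x. exp (- l * x ^ 2)"] by simp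
    then show "(\<Prod>m<k. \<Sum>r<d. ?g s r) = gauss_residue_sum l d ^ k" by simp
  qed
  finally show ?thesis by simp
qed

lemma gauss_residue_sum_power_minus_1_le:
  assumes d: "d > 0" and l: "l > 0"
  shows "gauss_residue_sum l d ^ n - 1 \<le> 3 * real n * real d ^ n / sqrt l"
proof -
  let ?G = "gauss_residue_sum l d"
  have G: "1 \<le> ?G" "?G \<le> real d" "?G - 1 \<le> 3 * real d / sqrt l"
    using gauss_residue_sum_ge_1[OF d] gauss_residue_sum_le[of l d] gauss_residue_sum_minus_1_le[OF d l] l
    by auto
  have "?G ^ n - 1 \<le> real n * ?G ^ (n - 1) * (?G - 1)"
    by (rule power_minus_one_le[OF G(1)])
  also have "\<dots> \<le> real n * real d ^ (n - 1) * (3 * real d / sqrt l)"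
    using G by (intro mult_mono mult_left_mono power_mono) auto
  also have "\<dots> = 3 * real n * real d ^ n / sqrt l"
    by (cases n) (simp_all add: field_simps)
  finally show ?thesis .
qed

section \<open>Decay of the characteristic function\<close>

locale lattice_walk_bounded = lattice_walk +
  fixes a :: real
  assumes a_pos: "a > 0"
    and a_le_step_probs: "\<And>j x. j \<ge> 1 \<Longrightarrow> x \<in> set (\<sigma> j) \<Longrightarrow> a \<le> x"
    and k_ge_2: "k \<ge> 2"
begin

definition spread :: "nat \<Rightarrow> nat list \<Rightarrow> real" where
  "spread d t = (\<Sum>m\<in>{1..<k}. norm (e2pi (real (t ! m) / real d) - e2pi (real (t ! 0) / real d)) ^ 2)"

lemma step_probs:
  assumes "j \<ge> 1"
  shows "length (\<sigma> j) = k" "(\<Sum>m<k. \<sigma> j ! m) = 1" "\<And>m. m < k \<Longrightarrow> a \<le> \<sigma> j ! m"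
  using valid_step_types[OF assms] a_le_step_probs[OF assms]
  by (auto simp: valid_type_def sum_list_sum_nth atLeast0LessThan)

lemma norm_step_char_le:
  assumes "j \<ge> 1"
  shows "norm (step_char (\<sigma> j) d t) \<le> exp (- (a^2 / 2) * spread d t)"
  unfolding step_char_def spread_def
  using step_probs[OF assms] a_pos k_ge_2
  by (intro norm_convex_comb_unit_le_exp) auto

lemma norm_walk_char_le: "norm (walk_char i d t) \<le> exp (- (real i * a^2 / 2) * spread d t)"
proof -
  have "norm (walk_char i d t) \<le> (\<Prod>j=1..i. exp (- (a^2 / 2) * spread d t))"
    unfolding walk_char_eq_prod prod_norm[symmetric] using norm_step_char_le by (intro prod_mono) auto
  also have "\<dots> = exp (- (real i * a^2 / 2) * spread d t)"
    by (simp flip: exp_of_nat_mult)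
  finally show ?thesis .
qed

lemma walk_char_replicate:
  assumes "d > 0" and "d dvd i"
  shows "walk_char i d (replicate k c) = 1"
proof -
  have "step_char (\<sigma> j) d (replicate k c) = e2pi (real c / real d)" if "j \<in> {1..i}" for j
    using step_probs[of j] that by (simp add: step_char_def flip: scaleR_sum_left)
  then have "walk_char i d (replicate k c) = e2pi (real (i * c) / real d)"
    by (simp add: walk_char_eq_prod e2pi_power)
  also have "\<dots> = 1"
  proof -
    obtain q where "i = d * q" using assms(2) ..
    then have "real (i * c) / real d = real (q * c)"
      using assms(1) by simp
    then show ?thesis by (simp only: e2pi_of_nat)
  qed
  finally show ?thesis .
qed

lemma sum_exp_spread:
  assumes "d > 0"
  shows "(\<Sum>t\<in>residue_lists k d. exp (- l * spread d t)) = real d * gauss_residue_sum l d ^ (k - 1)"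
proof -
  have "Suc (k - 1) = k" using k_ge_2 by simp
  then show ?thesis
    using sum_residue_lists_exp_anchored[OF assms, where k = "k - 1" and l = l] by (simp add: spread_def)
qed

definition diagonal_lists :: "nat \<Rightarrow> nat list set" where
  "diagonal_lists d = (\<lambda>c. replicate k c) ` {..<d}"

lemma sum_indicator_diagonal_lists:
  "(\<Sum>t\<in>residue_lists k d. if t \<in> diagonal_lists d then 1 else 0 :: 'b::semiring_1) = of_nat d"
proof -
  have "diagonal_lists d \<subseteq> residue_lists k d" "card (diagonal_lists d) = d"
    using k_ge_2 by (auto simp: diagonal_lists_def residue_lists_def card_image inj_on_def)
  then show ?thesis
    using finite_residue_lists by (simp add: sum.If_cases Int_absorb1)
qed

lemma prob_all_dvd_minus_fourier:
  assumes "d > 0"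
  shows "complex_of_real (prob_all_dvd i d - 1 / real d ^ (k - 1))
    = (\<Sum>t\<in>residue_lists k d. walk_char i d t - (if t \<in> diagonal_lists d then 1 else 0)) / of_nat d ^ k"
proof -
  have "(of_nat d :: complex) ^ k = of_nat d * of_nat d ^ (k - 1)"
    using k_ge_2 by (simp flip: power_Suc)
  then have "1 / complex_of_nat d ^ (k - 1) = of_nat d / of_nat d ^ k"
    using assms by simp
  then show ?thesis
    using assms by (simp add: prob_all_dvd_fourier sum_subtractf diff_divide_distrib sum_indicator_diagonal_lists)
qed

lemma norm_walk_char_minus_indicator_le:
  assumes "d > 0" and "d dvd i"
  shows "norm (walk_char i d t - (if t \<in> diagonal_lists d then 1 else 0))
    \<le> exp (- (real i * a^2 / 2) * spread d t) - (if t \<in> diagonal_lists d then 1 else 0)"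
proof (cases "t \<in> diagonal_lists d")
  case True
  then obtain c where "t = replicate k c" by (auto simp: diagonal_lists_def)
  then show ?thesis
    using True k_ge_2 walk_char_replicate[OF assms] by (simp add: spread_def)
qed (use norm_walk_char_le[of i d t] in simp)

lemma prob_all_dvd_approx:
  assumes i: "i \<ge> 1" and d: "d > 0" and di: "d dvd i"
  shows "\<bar>prob_all_dvd i d - 1 / real d ^ (k - 1)\<bar> \<le> 3 * real (k - 1) / sqrt (real i * a^2 / 2)"
proof -
  define l where "l = real i * a^2 / 2"
  have l: "l > 0" using i a_pos by (simp add: l_def)
  let ?\<chi> = "\<lambda>t. if t \<in> diagonal_lists d then 1 else 0"
  have "\<bar>prob_all_dvd i d - 1 / real d ^ (k - 1)\<bar>
      = norm (complex_of_real (prob_all_dvd i d - 1 / real d ^ (k - 1)))"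
    by (simp only: norm_of_real)
  also have "\<dots> = norm (\<Sum>t\<in>residue_lists k d. walk_char i d t - ?\<chi> t) / real d ^ k"
    unfolding prob_all_dvd_minus_fourier[OF d] by (simp add: norm_divide norm_power)
  also have "\<dots> \<le> (\<Sum>t\<in>residue_lists k d. exp (- l * spread d t) - ?\<chi> t) / real d ^ k"
    unfolding l_def using norm_walk_char_minus_indicator_le[OF d di]
    by (intro divide_right_mono order_trans[OF norm_sum] sum_mono) auto
  also have "\<dots> = (real d * gauss_residue_sum l d ^ (k - 1) - real d) / real d ^ k"
    by (simp only: sum_subtractf sum_indicator_diagonal_lists sum_exp_spread[OF d])
  also have "\<dots> = (gauss_residue_sum l d ^ (k - 1) - 1) / real d ^ (k - 1)"
    using d k_ge_2 by (simp add: field_simps flip: power_Suc)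
  also have "\<dots> \<le> 3 * real (k - 1) / sqrt l"
    using gauss_residue_sum_power_minus_1_le[OF d l, of "k - 1"] d by (simp add: divide_le_eq)
  finally show ?thesis unfolding l_def .
qed

end

section \<open>The error term\<close>

lemma sum_divisors_inverse_sqrt_le:
  "(\<Sum>i=1..n. \<Sum>d | d dvd i. 1 / sqrt (real i)) \<le> 2 * sqrt (real n) * harm n"
proof -
  have "(\<Sum>i=1..n. \<Sum>d | d dvd i. 1 / sqrt (real i))
      = (\<Sum>d=1..n. 1 / sqrt (real d) * (\<Sum>j=1..n div d. 1 / sqrt (real j)))"
    using sum_sum_divisors_swap[where f = "\<lambda>d i. 1 / sqrt (real i)" and n = n and P = "\<lambda>_. True"]
    by (simp add: atLeastAtMost_def atLeast_def atMost_def Collect_conj_eq sum_distrib_left real_sqrt_mult)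
  also have "\<dots> \<le> (\<Sum>d=1..n. 2 * sqrt (real n) * (1 / real d))"
  proof (rule sum_mono)
    fix d assume d: "d \<in> {1..n}"
    have "real d * real (n div d) \<le> real n"
      by (metis of_nat_le_iff of_nat_mult times_div_less_eq_dividend)
    then have "sqrt (real (n div d)) \<le> sqrt (real n / real d)"
      using d by (simp add: field_simps)
    then have "(\<Sum>j=1..n div d. 1 / sqrt (real j)) \<le> 2 * sqrt (real n / real d)"
      using sum_inverse_sqrt_le[of "n div d"] by linarith
    then have "1 / sqrt (real d) * (\<Sum>j=1..n div d. 1 / sqrt (real j)) \<le> 1 / sqrt (real d) * (2 * sqrt (real n / real d))"
      by (intro mult_left_mono) auto
    also have "\<dots> = 2 * sqrt (real n) * (1 / real d)"
      using d by (simp add: real_sqrt_divide field_simps)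
    finally show "1 / sqrt (real d) * (\<Sum>j=1..n div d. 1 / sqrt (real j)) \<le> 2 * sqrt (real n) * (1 / real d)" .
  qed
  also have "\<dots> = 2 * sqrt (real n) * harm n"
    by (simp add: harm_def sum_distrib_left inverse_eq_divide)
  finally show ?thesis .
qed

context lattice_walk_bounded
begin

definition error_const :: real where
  "error_const = 3 * real (k - 1) / sqrt (a^2 / 2)"

lemma EXvis_approx:
  assumes i: "i \<ge> 1"
  shows "\<bar>EXvis k \<sigma> i - visible_density k i\<bar> \<le> (\<Sum>d | d dvd i. error_const / sqrt (real i))"
proof -
  have "EXvis k \<sigma> i - visible_density k i
      = (\<Sum>d | d dvd i. moebius_mu d * (prob_all_dvd i d - 1 / real d ^ (k - 1)))"
    unfolding EXvis_eq_sum_moebius[OF i] visible_density_def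
    by (simp add: sum_subtractf right_diff_distrib)
  also have "\<bar>\<dots>\<bar> \<le> (\<Sum>d | d dvd i. \<bar>moebius_mu d\<bar> * \<bar>prob_all_dvd i d - 1 / real d ^ (k - 1)\<bar>)"
    by (rule order_trans[OF sum_abs]) (simp add: abs_mult)
  also have "\<dots> \<le> (\<Sum>d | d dvd i. 1 * (error_const / sqrt (real i)))"
  proof (rule sum_mono)
    fix d assume "d \<in> {d. d dvd i}"
    then have "d > 0" "d dvd i" using i by (auto intro: Nat.gr0I)
    moreover have "sqrt (real i * a^2 / 2) = sqrt (a^2 / 2) * sqrt (real i)"
      by (simp add: real_sqrt_mult real_sqrt_divide)
    ultimately have "\<bar>prob_all_dvd i d - 1 / real d ^ (k - 1)\<bar> \<le> error_const / sqrt (real i)"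
      using prob_all_dvd_approx[OF i] by (simp add: error_const_def)
    then show "\<bar>moebius_mu d\<bar> * \<bar>prob_all_dvd i d - 1 / real d ^ (k - 1)\<bar> \<le> 1 * (error_const / sqrt (real i))"
      by (intro mult_mono abs_moebius_mu_le) auto
  qed
  finally show ?thesis by simp
qed

lemma ESbar_approx_harm:
  assumes p: "prime p" and b: "b < p" and n: "n \<ge> 1"
  shows "\<bar>ESbar k \<sigma> n b p - residue_density k p b\<bar> \<le> ((2 * error_const + 2) * harm n + 20) / sqrt (real n)"
proof -
  let ?I = "{i. i \<in> {1..n} \<and> i mod p = b}"
  have K: "error_const \<ge> 0" by (simp add: error_const_def)
  have "\<bar>(\<Sum>i\<in>?I. EXvis k \<sigma> i) - (\<Sum>i\<in>?I. visible_density k i)\<bar>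
      \<le> (\<Sum>i\<in>?I. \<Sum>d | d dvd i. error_const / sqrt (real i))"
    unfolding sum_subtractf[symmetric] by (intro order_trans[OF sum_abs] sum_mono EXvis_approx) auto
  also have "\<dots> \<le> (\<Sum>i=1..n. \<Sum>d | d dvd i. error_const / sqrt (real i))"
    using K by (intro sum_mono2) (auto intro!: sum_nonneg)
  also have "\<dots> = error_const * (\<Sum>i=1..n. \<Sum>d | d dvd i. 1 / sqrt (real i))"
    by (simp add: sum_distrib_left mult.commute)
  also have "\<dots> \<le> error_const * (2 * sqrt (real n) * harm n)"
    using K by (intro mult_left_mono sum_divisors_inverse_sqrt_le)
  finally have "\<bar>(\<Sum>i\<in>?I. EXvis k \<sigma> i) - real n * residue_density k p b\<bar>
      \<le> error_const * (2 * sqrt (real n) * harm n) + (2 * harm n + 20 * sqrt (real n))"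
    using sum_visible_density_residue_class[OF k_ge_2 p b n] by linarith
  also have "\<dots> \<le> sqrt (real n) * ((2 * error_const + 2) * harm n + 20)"
    using n K harm_nonneg[where 'a = real] by (simp add: algebra_simps mult_left_mono)
  finally have bound: "\<bar>(\<Sum>i\<in>?I. EXvis k \<sigma> i) - real n * residue_density k p b\<bar>
      \<le> sqrt (real n) * ((2 * error_const + 2) * harm n + 20)" .
  have "ESbar k \<sigma> n b p - residue_density k p b
      = ((\<Sum>i\<in>?I. EXvis k \<sigma> i) - real n * residue_density k p b) / real n"
    using n by (simp add: ESbar_def field_simps)
  then have "\<bar>ESbar k \<sigma> n b p - residue_density k p b\<bar>
      = \<bar>(\<Sum>i\<in>?I. EXvis k \<sigma> i) - real n * residue_density k p b\<bar> / real n"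
    by (simp add: abs_divide)
  also have "\<dots> \<le> sqrt (real n) * ((2 * error_const + 2) * harm n + 20) / (sqrt (real n) * sqrt (real n))"
    using bound by (simp add: divide_right_mono)
  also have "\<dots> = ((2 * error_const + 2) * harm n + 20) / sqrt (real n)"
    by (rule mult_divide_mult_cancel_left) (use n in simp)
  finally show ?thesis .
qed

lemma ESbar_approx:
  assumes p: "prime p" and b: "b < p" and n: "n \<ge> 1" and \<epsilon>: "\<epsilon> > 0"
  shows "\<bar>ESbar k \<sigma> n b p - residue_density k p b\<bar>
    \<le> (2 * error_const + 22) * (1 + 1 / \<epsilon>) * real n powr (-1/2 + \<epsilon>)"
proof -
  have K: "error_const \<ge> 0" by (simp add: error_const_def)
  have "1 \<le> 1 + 1 / \<epsilon>" "1 \<le> real n powr \<epsilon>"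
    using n \<epsilon> by (simp_all add: ge_one_powr_ge_zero)
  then have one: "1 \<le> (1 + 1 / \<epsilon>) * real n powr \<epsilon>"
    using mult_mono[of 1 "1 + 1 / \<epsilon>" 1 "real n powr \<epsilon>"] by simp
  have "(2 * error_const + 2) * harm n + 20 \<le> (2 * error_const + 2) * ((1 + 1 / \<epsilon>) * real n powr \<epsilon>)
      + 20 * ((1 + 1 / \<epsilon>) * real n powr \<epsilon>)"
    using harm_le_powr[OF n \<epsilon>] K one by (intro add_mono mult_left_mono) auto
  also have "\<dots> = (2 * error_const + 22) * (1 + 1 / \<epsilon>) * real n powr \<epsilon>"
    by (simp add: algebra_simps)
  finally have "\<bar>ESbar k \<sigma> n b p - residue_density k p b\<bar>
      \<le> (2 * error_const + 22) * (1 + 1 / \<epsilon>) * real n powr \<epsilon> / sqrt (real n)"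
    using ESbar_approx_harm[OF p b n] divide_right_mono[of _ _ "sqrt (real n)"]
    by (meson order_trans real_sqrt_ge_zero of_nat_0_le_iff)
  also have "\<dots> = (2 * error_const + 22) * (1 + 1 / \<epsilon>) * real n powr (-1/2 + \<epsilon>)"
    by (simp add: powr_diff powr_half_sqrt)
  finally show ?thesis .
qed

end

lemma ESbar_approx_uniform:
  fixes A :: "real list set"
  assumes k: "k \<ge> 2" and A: "finite A" "\<forall>\<alpha>\<in>A. valid_type k \<alpha>" and p: "prime p" and \<epsilon>: "\<epsilon> > 0"
  shows "\<exists>C N. \<forall>\<sigma>. (\<forall>i\<ge>1. \<sigma> i \<in> A) \<longrightarrow> (\<forall>n\<ge>N.
    \<bar>ESbar k \<sigma> n 0 p - residue_density k p 0\<bar> \<le> C * real n powr (-1/2 + \<epsilon>)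
    \<and> (\<forall>a\<in>{1..<p}. \<bar>ESbar k \<sigma> n a p - residue_density k p a\<bar> \<le> C * real n powr (-1/2 + \<epsilon>)))"
proof -
  define a where "a = Min (insert 1 (\<Union>\<alpha>\<in>A. set \<alpha>))"
  have "finite (insert 1 (\<Union>\<alpha>\<in>A. set \<alpha>))" using A(1) by simp
  then have a: "a > 0" "\<And>\<alpha> x. \<alpha> \<in> A \<Longrightarrow> x \<in> set \<alpha> \<Longrightarrow> a \<le> x"
    using A(2) by (auto simp: a_def valid_type_def intro!: Min_le)
  define C where "C = (2 * (3 * real (k - 1) / sqrt (a^2 / 2)) + 22) * (1 + 1 / \<epsilon>)"
  have bound: "\<bar>ESbar k \<sigma> n b p - residue_density k p b\<bar> \<le> C * real n powr (-1/2 + \<epsilon>)"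
    if \<sigma>: "\<forall>i\<ge>1. \<sigma> i \<in> A" and n: "n \<ge> 1" and b: "b < p" for \<sigma> n b
  proof -
    interpret lattice_walk_bounded k \<sigma> a
      by unfold_locales (use \<sigma> k A(2) a in auto)
    show ?thesis
      using ESbar_approx[OF p b n \<epsilon>] by (simp add: C_def error_const_def)
  qed
  show ?thesis
    using prime_gt_0_nat[OF p] by (intro exI[of _ C] exI[of _ 1] allI impI conjI ballI bound) auto
qed

theorem proposition4p2:
  fixes A :: "real list set" and q k p1 :: nat
  assumes "q \<ge> 1" and "k \<ge> 2" and "finite A" and "card A = q"
    and "\<forall>\<alpha>\<in>A. valid_type k \<alpha>"
    and "prime p1" and "p1 \<ge> 3"
  shows "\<forall>\<epsilon>>0. \<exists>C N. \<forall>\<sigma>. (\<forall>i\<ge>1. \<sigma> i \<in> A) \<longrightarrow> (\<forall>n\<ge>N.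
     \<bar>ESbar k \<sigma> n 0 p1 - (real p1 ^ (k - 1) - 1) / (real p1 ^ k - 1) * (1 / zeta_nat k)\<bar>
        \<le> C * real n powr (-1/2 + \<epsilon>)
   \<and> (\<forall>a\<in>{1..<p1}.
     \<bar>ESbar k \<sigma> n a p1 - real p1 ^ (k - 1) / (real p1 ^ k - 1) * (1 / zeta_nat k)\<bar>
        \<le> C * real n powr (-1/2 + \<epsilon>)))"
  using ESbar_approx_uniform[OF assms(2,3,5,6)] by (simp add: residue_density_def)

end
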